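(* Let $N$ be a prime and $m$ a positive integer prime to $N$ with $m<N^2/4$. Then every non-cuspidal point in the support of the divisor $i_{\{1,2\}}^*\widetilde{C}_m$ on $X_{\mathrm{ns}}(N)$ is a Heegner point in the sense of Kohen--Pacetti.
   Context: Fix a non-square $\varepsilon\in\mathbb{F}_N$. Non-cuspidal points of $X_{\mathrm{ns}}(N)$ correspond to isomorphism classes of pairs $(E,\phi_\varepsilon)$ with $E$ an elliptic curve and $\phi_\varepsilon$ an endomorphism of $E[N]$ with $\phi_\varepsilon^2=\varepsilon$; $(E,\phi)\cong(E',\phi')$ if there is an isomorphism $\psi:E\to E'$ with $\psi\circ\phi=\phi'\circ\psi$ on $E[N]$. For $m$ prime to $N$, $X_{\mathrm{ns}}(N,m)$ parametrises triples $(E,\phi_\varepsilon,C)$ with $C\subset E$ cyclic of order $m$; the Hecke correspondence $\widetilde{C}_m\subset X_{\mathrm{ns}}(N)\times X_{\mathrm{ns}}(N)$ is the image of $X_{\mathrm{ns}}(N,m)$ under $(E,\phi_\varepsilon,C)\mapsto\big((E,\phi_\varepsilon),(E/C,\overline{\pi_C}\phi_\varepsilon\overline{\pi_C}^{-1})\big)$, with $\pi_C:E\to E/C$ and $\overline{\pi_C}$ its restriction to $E[N]$. $i_{\{1,2\}}$ is the diagonal embedding. $(E,\phi_\varepsilon)$ is a Heegner point (Kohen--Pacetti) if $\mathrm{End}(E)$ is an order of conductor prime to $N$ in an imaginary quadratic field and $\phi_\varepsilon$ is induced by an endomorphism of $E$. *)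

theory Defs
  imports Complex_Main "HOL-Computational_Algebra.Polynomial" "HOL-Number_Theory.Number_Theory"
begin

text \<open>Complex-analytic model: an elliptic curve over the complex numbers is C/L for a
lattice L; E[N] is (1/N)L/L; endomorphisms of E are multiplications by a with aL in L.\<close>

definition lattice_gen :: "complex \<Rightarrow> complex \<Rightarrow> complex set" where
  "lattice_gen w1 w2 = {of_int a * w1 + of_int b * w2 | a b. True}"

definition is_lattice :: "complex set \<Rightarrow> bool" where
  "is_lattice L \<longleftrightarrow> (\<exists>w1 w2. Im (w2 / w1) \<noteq> 0 \<and> L = lattice_gen w1 w2)"

text \<open>Representatives (in C) of the N-torsion points of C/L.\<close>
definition torsion :: "nat \<Rightarrow> complex set \<Rightarrow> complex set" where
  "torsion n L = {x. of_nat n * x \<in> L}"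

text \<open>A group endomorphism of E[n], given on representatives and well defined modulo L.\<close>
definition is_tors_endo :: "nat \<Rightarrow> complex set \<Rightarrow> (complex \<Rightarrow> complex) \<Rightarrow> bool" where
  "is_tors_endo n L f \<longleftrightarrow>
     (\<forall>x\<in>torsion n L. f x \<in> torsion n L) \<and>
     (\<forall>x\<in>torsion n L. \<forall>y\<in>torsion n L. x - y \<in> L \<longrightarrow> f x - f y \<in> L) \<and>
     (\<forall>x\<in>torsion n L. \<forall>y\<in>torsion n L. f (x + y) - f x - f y \<in> L)"

text \<open>Non-cuspidal point (E, phi_eps) of X_ns(N): phi_eps^2 = eps on E[N].\<close>
definition ns_structure :: "nat \<Rightarrow> int \<Rightarrow> complex set \<Rightarrow> (complex \<Rightarrow> complex) \<Rightarrow> bool" where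
  "ns_structure n eps L f \<longleftrightarrow> is_lattice L \<and> is_tors_endo n L f \<and>
     (\<forall>x\<in>torsion n L. f (f x) - of_int eps * x \<in> L)"

text \<open>Isomorphism of pairs: psi = multiplication by c, C/L -> C/L', with psi o phi = phi' o psi on E[N].\<close>
definition ns_iso :: "nat \<Rightarrow> complex set \<Rightarrow> (complex \<Rightarrow> complex) \<Rightarrow> complex set \<Rightarrow> (complex \<Rightarrow> complex) \<Rightarrow> bool" where
  "ns_iso n L f L' f' \<longleftrightarrow> (\<exists>c. c \<noteq> 0 \<and> (\<lambda>z. c * z) ` L = L' \<and>
     (\<forall>x\<in>torsion n L. c * f x - f' (c * x) \<in> L'))"

text \<open>L' is the lattice with C/L' = E/C for a cyclic subgroup C = <z mod L> of order m of E = C/L;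
  the projection pi_C is induced by the identity of C.\<close>
definition cyclic_quotient :: "nat \<Rightarrow> complex set \<Rightarrow> complex set \<Rightarrow> bool" where
  "cyclic_quotient m L L' \<longleftrightarrow> (\<exists>z. of_nat m * z \<in> L \<and>
     (\<forall>k::nat. 0 < k \<and> k < m \<longrightarrow> of_nat k * z \<notin> L) \<and>
     L' = {of_int k * z + l | k l. l \<in> L})"

text \<open>(x, y) lies in the Hecke correspondence C_m: there is (E, phi, C) with (E, phi) = x and
  (E/C, pi phi pi^-1) = y up to isomorphism; pi phi pi^-1 is characterised by phi' o pi = pi o phi
  on E[N].\<close>
definition hecke_corr :: "nat \<Rightarrow> int \<Rightarrow> nat \<Rightarrow> complex set \<Rightarrow> (complex \<Rightarrow> complex)
    \<Rightarrow> complex set \<Rightarrow> (complex \<Rightarrow> complex) \<Rightarrow> bool" where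
  "hecke_corr N eps m L1 f1 L2 f2 \<longleftrightarrow> (\<exists>L f L' f'. ns_structure N eps L f \<and> ns_iso N L f L1 f1 \<and>
     cyclic_quotient m L L' \<and> is_tors_endo N L' f' \<and>
     (\<forall>x\<in>torsion N L. f' x - f x \<in> L') \<and> ns_iso N L' f' L2 f2)"

definition End_ring :: "complex set \<Rightarrow> complex set" where
  "End_ring L = {a. (\<lambda>z. a * z) ` L \<subseteq> L}"

definition alg_int :: "complex \<Rightarrow> bool" where
  "alg_int z \<longleftrightarrow> (\<exists>p :: int poly. lead_coeff p = 1 \<and> poly (map_poly of_int p) z = 0)"

definition quad_field :: "complex \<Rightarrow> complex set" where
  "quad_field \<tau> = {of_rat a + of_rat b * \<tau> | a b. True}"

definition imag_quad :: "complex \<Rightarrow> bool" where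
  "imag_quad \<tau> \<longleftrightarrow> Im \<tau> \<noteq> 0 \<and> \<tau>\<^sup>2 \<in> quad_field \<tau>"

definition ring_of_integers :: "complex set \<Rightarrow> complex set" where
  "ring_of_integers K = {z \<in> K. alg_int z}"

definition is_order :: "complex set \<Rightarrow> complex set \<Rightarrow> bool" where
  "is_order R K \<longleftrightarrow> R \<subseteq> ring_of_integers K \<and> 1 \<in> R \<and> is_lattice R \<and>
     (\<forall>x\<in>R. \<forall>y\<in>R. x + y \<in> R \<and> x - y \<in> R \<and> x * y \<in> R)"

text \<open>Conductor = index [O_K : O].\<close>
definition conductor :: "complex set \<Rightarrow> complex set \<Rightarrow> nat" where
  "conductor R K = card ((\<lambda>x. {x + y | y. y \<in> R}) ` ring_of_integers K)"

definition heegner :: "nat \<Rightarrow> complex set \<Rightarrow> (complex \<Rightarrow> complex) \<Rightarrow> bool" where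
  "heegner N L f \<longleftrightarrow>
     (\<exists>\<tau>. imag_quad \<tau> \<and> is_order (End_ring L) (quad_field \<tau>) \<and>
        coprime (conductor (End_ring L) (quad_field \<tau>)) N) \<and>
     (\<exists>\<alpha>\<in>End_ring L. \<forall>x\<in>torsion N L. f x - \<alpha> * x \<in> L)"

end

theory Submission
  imports Defs
begin

text \<open>
  A point \<open>(E, \<phi>)\<close> on the diagonal of \<open>C_m\<close> yields an endomorphism \<open>c\<close> of \<open>E\<close> (an \<open>m\<close>-isogeny
  followed by an isomorphism back to \<open>E\<close>) that commutes with \<open>\<phi>\<close> on \<open>E[N]\<close> and has cyclic cokernel.
  A real \<open>c\<close> is then \<open>\<plusminus>1\<close>, forcing \<open>m = 1\<close>. Otherwise, since \<open>\<phi>^2 = eps\<close> with \<open>eps\<close> a non-residue, the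
  commutant of \<open>\<phi>\<close> modulo \<open>N\<close> is \<open>\<int>/N[\<phi>]\<close>, so \<open>c \<equiv> a + b \<phi>\<close> on \<open>E[N]\<close>. If \<open>N \<mid> b\<close>, then \<open>(c - a)/N\<close> is a
  nonreal endomorphism, whence \<open>m \<ge> norm c \<ge> (Im c)^2 \<ge> N^2/4\<close>, which is excluded. So \<open>b\<close> is invertible
  and \<open>\<alpha> = b^-1 (c - a)\<close> induces \<open>\<phi>\<close>. Then \<open>End(E) = \<int>[\<omega>]\<close> is an imaginary quadratic order, and
  \<open>\<alpha>^2 \<equiv> eps\<close> modulo \<open>N\<close> shows that \<open>N\<close> divides neither its discriminant nor its conductor.
\<close>


section \<open>Integrality of rational numbers\<close>

lemma rat_Ints_if_power2_Ints:
  fixes q :: rat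
  assumes "q^2 \<in> \<int>"
  shows "q \<in> \<int>"
proof -
  obtain a b where qab: "quotient_of q = (a, b)" by (cases "quotient_of q")
  have q: "q = of_int a / of_int b" and b: "b > 0" and ab: "coprime a b"
    using qab quotient_of_div quotient_of_denom_pos quotient_of_coprime by auto
  from assms obtain z where "q^2 = of_int z" by (auto elim: Ints_cases)
  hence "of_int a ^ 2 / of_int b ^ 2 = (of_int z :: rat)" using q by (simp add: power_divide)
  hence "of_int (a^2) = (of_int (z * b^2) :: rat)" using b by (simp add: field_simps)
  hence "a^2 = z * b^2" by (simp only: of_int_eq_iff)
  hence "b^2 dvd a^2" by simp
  moreover have "coprime (b^2) (a^2)" using ab by (simp add: coprime_commute)
  ultimately have "is_unit (b^2)" by (metis dvd_refl coprime_common_divisor)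
  hence "b = 1" using b by (simp add: power2_eq_square zmult_eq_1_iff)
  thus ?thesis using q by simp
qed

lemma rat_Ints_if_bounded_denominators:
  fixes q :: rat and E :: int
  assumes "E > 0" and "\<And>k. of_int E * q^k \<in> \<int>"
  shows "q \<in> \<int>"
proof -
  obtain a b where qab: "quotient_of q = (a, b)" by (cases "quotient_of q")
  have q: "q = of_int a / of_int b" and b: "b > 0" and ab: "coprime a b"
    using qab quotient_of_div quotient_of_denom_pos quotient_of_coprime by auto
  have dvd: "b^k dvd E" for k
  proof -
    from assms(2)[of k] obtain z where "of_int E * q^k = of_int z" by (auto elim: Ints_cases)
    hence "of_int E * (of_int a ^ k / of_int b ^ k) = (of_int z :: rat)" using q by (simp add: power_divide)
    hence "of_int (E * a^k) = (of_int (z * b^k) :: rat)" using b by (simp add: field_simps)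
    hence "E * a^k = z * b^k" by (simp only: of_int_eq_iff)
    hence "b^k dvd E * a^k" by (metis dvd_triv_right)
    moreover have "coprime (b^k) (a^k)" using ab by (simp add: coprime_commute)
    ultimately show ?thesis by (simp add: coprime_dvd_mult_left_iff)
  qed
  have "b = 1"
  proof (rule ccontr)
    assume "b \<noteq> 1"
    hence "2 ^ nat E \<le> b ^ nat E" using b by (simp add: power_mono)
    also have "\<dots> \<le> E" using dvd[of "nat E"] assms(1) by (simp add: zdvd_imp_le)
    also have "E < 2 ^ nat E" using assms(1)
      by (metis int_nat_eq less_exp of_nat_less_iff order_less_imp_le of_nat_numeral of_nat_power)
    finally show False by simp
  qed
  thus ?thesis using q by simp
qed

definition rat_den :: "rat \<Rightarrow> int" where
  "rat_den q = snd (quotient_of q)"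

lemma rat_den_pos: "rat_den q > 0"
  unfolding rat_den_def using quotient_of_denom_pos' by auto

lemma mult_Ints_if_rat_den_dvd:
  assumes "rat_den q dvd E"
  shows "of_int E * q \<in> \<int>"
proof -
  obtain a b where qab: "quotient_of q = (a, b)" by (cases "quotient_of q")
  hence "q = of_int a / of_int b" "b > 0" using quotient_of_div quotient_of_denom_pos by auto
  hence den: "of_int (rat_den q) * q \<in> \<int>" unfolding rat_den_def qab by simp
  obtain k where "E = rat_den q * k" using assms by blast
  hence "of_int E * q = of_int k * (of_int (rat_den q) * q)" by simp
  thus ?thesis using den by (metis Ints_mult Ints_of_int)
qed

lemma of_rat_complex_eq_of_real: "(of_rat q :: complex) = of_real (of_rat q)"
proof -
  obtain a b where "quotient_of q = (a, b)" by (cases "quotient_of q")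
  hence "q = of_int a / of_int b" using quotient_of_div by auto
  thus ?thesis by (simp add: of_rat_divide)
qed

lemma cnj_of_rat [simp]: "cnj (of_rat q :: complex) = of_rat q"
  by (simp add: of_rat_complex_eq_of_real)


section \<open>Algebraic integers of degree two\<close>

definition scaled_span :: "int \<Rightarrow> complex \<Rightarrow> complex set" where
  "scaled_span \<Delta> x = {y. \<exists>u v :: int. of_int \<Delta> * y = of_int u + of_int v * x}"

lemma scaled_span_sum:
  assumes "finite A" and "\<And>j. j \<in> A \<Longrightarrow> g j \<in> scaled_span \<Delta> x"
  shows "(\<Sum>j\<in>A. of_int (h j) * g j) \<in> scaled_span \<Delta> x"
  using assms
proof (induction A rule: finite_induct)
  case empty
  show ?case unfolding scaled_span_def by (rule CollectI, rule exI[of _ 0], rule exI[of _ 0]) simp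
next
  case (insert a A)
  obtain u v where "of_int \<Delta> * g a = of_int u + of_int v * x"
    using insert.prems unfolding scaled_span_def by blast
  moreover obtain u' v' where "of_int \<Delta> * (\<Sum>j\<in>A. of_int (h j) * g j) = of_int u' + of_int v' * x"
    using insert unfolding scaled_span_def by blast
  moreover have "of_int \<Delta> * (\<Sum>j\<in>insert a A. of_int (h j) * g j)
      = of_int (h a) * (of_int \<Delta> * g a) + of_int \<Delta> * (\<Sum>j\<in>A. of_int (h j) * g j)"
    using insert.hyps by (simp add: distrib_left mult.left_commute)
  ultimately have "of_int \<Delta> * (\<Sum>j\<in>insert a A. of_int (h j) * g j)
      = of_int (h a * u + u') + of_int (h a * v + v') * x"
    by (simp add: algebra_simps)
  thus ?case unfolding scaled_span_def by blast
qed

lemma power_rat_coords: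
  fixes x :: complex
  assumes quad: "x^2 = of_rat t * x - of_rat s"
  obtains A B :: "nat \<Rightarrow> rat" where "\<And>k. x^k = of_rat (A k) + of_rat (B k) * x"
proof -
  have "\<forall>k. \<exists>ab. x^k = of_rat (fst ab) + of_rat (snd ab) * x"
  proof
    fix k show "\<exists>ab. x^k = of_rat (fst ab) + of_rat (snd ab) * x"
    proof (induction k)
      case 0 show ?case by (rule exI[of _ "(1, 0)"]) simp
    next
      case (Suc k)
      then obtain A B where "x^k = of_rat A + of_rat B * x" by auto
      hence "x^Suc k = of_rat A * x + of_rat B * x^2" by (simp add: algebra_simps power2_eq_square)
      also have "\<dots> = of_rat (- B * s) + of_rat (A + B * t) * x"
        unfolding quad by (simp add: of_rat_add of_rat_mult of_rat_minus algebra_simps)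
      finally show ?case by (intro exI[of _ "(- B * s, A + B * t)"]) simp
    qed
  qed
  from choice[OF this] obtain AB where "\<And>k. x^k = of_rat (fst (AB k)) + of_rat (snd (AB k)) * x" by blast
  thus ?thesis using that[of "fst \<circ> AB" "snd \<circ> AB"] by simp
qed

lemma powers_in_scaled_span_if_root:
  fixes x :: complex and p :: "int poly"
  assumes "lead_coeff p = 1" and root: "poly (map_poly of_int p) x = 0"
    and small: "\<And>j. j < degree p \<Longrightarrow> x^j \<in> scaled_span \<Delta> x"
  shows "x^k \<in> scaled_span \<Delta> x"
proof -
  define d where "d = degree p"
  have "degree (map_poly (of_int :: int \<Rightarrow> complex) p) = d" unfolding d_def by (rule degree_map_poly) simp
  hence "(\<Sum>i\<le>d. of_int (Polynomial.coeff p i) * x^i) = 0"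
    using root unfolding poly_altdef by (simp add: Polynomial.coeff_map_poly)
  moreover have "(\<Sum>i\<le>d. of_int (Polynomial.coeff p i) * x^i) = (\<Sum>j<d. of_int (Polynomial.coeff p j) * x^j) + x^d"
    using assms(1) d_def by (simp add: lessThan_Suc_atMost[symmetric])
  ultimately have top: "x^d = - (\<Sum>j<d. of_int (Polynomial.coeff p j) * x^j)"
    by (simp add: eq_neg_iff_add_eq_0 add.commute)
  have d_pos: "d > 0"
  proof (rule ccontr)
    assume "\<not> d > 0"
    thus False using top by simp
  qed
  show ?thesis
  proof (induction k rule: less_induct)
    case (less k)
    show ?case
    proof (cases "k < d")
      case True then show ?thesis using small d_def by blast
    next
      case False
      have "x^k = x^(k-d) * x^d" using False by (simp add: power_add[symmetric])
      also have "\<dots> = - (\<Sum>j<d. of_int (Polynomial.coeff p j) * x^(k-d+j))"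
        unfolding top by (simp add: sum_distrib_left power_add algebra_simps)
      also have "\<dots> = (\<Sum>j<d. of_int (- Polynomial.coeff p j) * x^(k-d+j))"
        by (simp add: sum_negf)
      also have "\<dots> \<in> scaled_span \<Delta> x"
        by (rule scaled_span_sum) (use False d_pos less in auto)
      finally show ?thesis .
    qed
  qed
qed

text \<open>The powers \<open>x^j = A j + B j x\<close>, \<open>j < deg p\<close>, have a common denominator, and the monic equation
  \<open>p(x) = 0\<close> propagates it to all powers.\<close>

lemma alg_int_powers_bounded_denominator:
  fixes x :: complex
  assumes quad: "x^2 = of_rat t * x - of_rat s" and "alg_int x"
  obtains \<Delta> :: int where "\<Delta> > 0" and "\<And>k. x^k \<in> scaled_span \<Delta> x"
proof -
  obtain p :: "int poly" where p: "lead_coeff p = 1" "poly (map_poly of_int p) x = 0"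
    using \<open>alg_int x\<close> unfolding alg_int_def by auto
  obtain A B where AB: "\<And>k. x^k = of_rat (A k) + of_rat (B k) * x" using power_rat_coords[OF quad] by blast
  define \<Delta> where "\<Delta> = (\<Prod>j<degree p. rat_den (A j) * rat_den (B j))"
  have "x^j \<in> scaled_span \<Delta> x" if "j < degree p" for j
  proof -
    have "rat_den (A j) * rat_den (B j) dvd \<Delta>" unfolding \<Delta>_def by (rule dvd_prodI) (use that in auto)
    hence "of_int \<Delta> * A j \<in> \<int>" "of_int \<Delta> * B j \<in> \<int>"
      by (auto intro!: mult_Ints_if_rat_den_dvd elim: dvd_mult_left dvd_mult_right)
    then obtain u v where "of_int \<Delta> * A j = of_int u" "of_int \<Delta> * B j = of_int v" by (auto elim!: Ints_cases)
    moreover have "of_int \<Delta> * x^j = of_rat (of_int \<Delta> * A j) + of_rat (of_int \<Delta> * B j) * x"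
      unfolding AB by (simp add: of_rat_mult distrib_left)
    ultimately show ?thesis unfolding scaled_span_def by auto
  qed
  moreover have "\<Delta> > 0" unfolding \<Delta>_def by (intro prod_pos) (simp add: rat_den_pos)
  ultimately show ?thesis using that powers_in_scaled_span_if_root[OF p] by blast
qed

lemma norm_in_scaled_span:
  fixes x :: complex and t s r :: rat
  assumes trace: "of_rat t = x + cnj x" and norm: "of_rat s = x * cnj x"
    and "y \<in> scaled_span \<Delta> x" and "y * cnj y = of_rat r"
  shows "of_int (\<Delta>^2 * rat_den t * rat_den s) * r \<in> \<int>"
proof -
  obtain u v :: int where uv: "of_int \<Delta> * y = of_int u + of_int v * x"
    using assms(3) unfolding scaled_span_def by blast
  have "(of_rat (of_int (\<Delta>^2) * r) :: complex) = (of_int \<Delta> * y) * cnj (of_int \<Delta> * y)"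
    using assms(4) by (simp add: of_rat_mult power2_eq_square mult_ac)
  also have "\<dots> = of_int (u^2) + of_int (u*v) * (x + cnj x) + of_int (v^2) * (x * cnj x)"
    unfolding uv by (simp add: algebra_simps power2_eq_square)
  also have "\<dots> = of_rat (of_int (u^2) + of_int (u*v) * t + of_int (v^2) * s)"
    by (simp add: trace norm of_rat_add of_rat_mult of_rat_power)
  finally have e: "of_int (\<Delta>^2) * r = of_int (u^2) + of_int (u*v) * t + of_int (v^2) * s"
    by (simp only: of_rat_eq_iff)
  have "of_int (\<Delta>^2 * rat_den t * rat_den s) * r = of_int (rat_den t * rat_den s) * (of_int (\<Delta>^2) * r)"
    by (simp add: algebra_simps)
  also have "\<dots> = of_int (rat_den s * u^2 * rat_den t) + of_int (u * v * rat_den s) * (of_int (rat_den t) * t)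
      + of_int (v^2 * rat_den t) * (of_int (rat_den s) * s)"
    unfolding e by (simp add: algebra_simps)
  finally show ?thesis using mult_Ints_if_rat_den_dvd[of t "rat_den t"] mult_Ints_if_rat_den_dvd[of s "rat_den s"]
    by (metis Ints_add Ints_mult Ints_of_int dvd_refl)
qed

text \<open>The norms \<open>s^k\<close> of \<open>x^k\<close> and \<open>(s + t + 1)^k\<close> of \<open>(x + 1)^k\<close> have bounded denominators.\<close>

lemma alg_int_trace_norm_Ints:
  fixes x :: complex and t s :: rat
  assumes trace: "of_rat t = x + cnj x" and norm: "of_rat s = x * cnj x" and "alg_int x"
  shows "t \<in> \<int>" and "s \<in> \<int>"
proof -
  have quad: "x^2 = of_rat t * x - of_rat s" using trace norm by (simp add: algebra_simps power2_eq_square)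
  obtain \<Delta> :: int where \<Delta>_pos: "\<Delta> > 0" and pow: "\<And>k. x^k \<in> scaled_span \<Delta> x"
    using alg_int_powers_bounded_denominator[OF quad \<open>alg_int x\<close>] by blast
  have pow1: "(x + 1)^k \<in> scaled_span \<Delta> x" for k
  proof -
    have "(x + 1)^k = (\<Sum>j\<le>k. of_int (int (k choose j)) * x^j)"
      by (subst binomial_ring) simp
    thus ?thesis by (simp only:) (rule scaled_span_sum; use pow in simp)
  qed
  define E where "E = \<Delta>^2 * rat_den t * rat_den s"
  have E_pos: "E > 0" unfolding E_def using \<Delta>_pos rat_den_pos by simp
  note norm_Ints = norm_in_scaled_span[OF trace norm, of _ \<Delta>, folded E_def]
  have s: "s \<in> \<int>"
    by (rule rat_Ints_if_bounded_denominators[OF E_pos norm_Ints[OF pow]])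
      (simp add: norm of_rat_power power_mult_distrib[symmetric])
  have "(x + 1) * cnj (x + 1) = x * cnj x + (x + cnj x) + 1" by (simp add: algebra_simps)
  hence "s + t + 1 \<in> \<int>"
    by (intro rat_Ints_if_bounded_denominators[OF E_pos norm_Ints[OF pow1]])
      (simp add: norm trace of_rat_power of_rat_add power_mult_distrib[symmetric])
  hence "(s + t + 1) - s - 1 \<in> \<int>" using s by (intro Ints_diff) simp_all
  thus "t \<in> \<int>" by simp
  show "s \<in> \<int>" by (rule s)
qed

section \<open>Nonreal complex numbers\<close>

lemma nonreal_indep_real:
  fixes w :: complex and a b :: real
  assumes "Im w \<noteq> 0" and "of_real a + of_real b * w = 0"
  shows "a = 0 \<and> b = 0"
proof -
  have "b * Im w = 0" using arg_cong[OF assms(2), of Im] by simp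
  hence "b = 0" using assms(1) by simp
  thus ?thesis using assms(2) by simp
qed

lemma nonreal_indep_int:
  fixes w :: complex and a b :: int
  assumes "Im w \<noteq> 0" and "of_int a + of_int b * w = 0"
  shows "a = 0 \<and> b = 0"
  using nonreal_indep_real[OF assms(1), of "of_int a" "of_int b"] assms(2) by simp

lemma nonreal_indep_rat:
  fixes w :: complex and a b :: rat
  assumes "Im w \<noteq> 0" and "of_rat a + of_rat b * w = 0"
  shows "a = 0 \<and> b = 0"
  using nonreal_indep_real[OF assms(1), of "of_rat a" "of_rat b"] assms(2)
  by (simp add: of_rat_complex_eq_of_real)

lemma nonreal_quadratic_vieta:
  fixes e :: complex
  assumes "Im e \<noteq> 0" and quad: "e^2 = of_int T * e - of_int n"
  shows "e + cnj e = of_int T" and "e * cnj e = of_int n" and "cnj e = of_int T - e"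
proof -
  have cquad: "cnj e ^ 2 = of_int T * cnj e - of_int n" using arg_cong[OF quad, of cnj] by simp
  have "(e - cnj e) * (e + cnj e - of_int T)
      = (e^2 - (of_int T * e - of_int n)) - (cnj e ^ 2 - (of_int T * cnj e - of_int n))"
    by (simp add: algebra_simps power2_eq_square)
  hence "(e - cnj e) * (e + cnj e - of_int T) = 0" using quad cquad by simp
  moreover have "e \<noteq> cnj e" using assms(1) by (metis Reals_cnj_iff complex_is_Real_iff)
  ultimately show "e + cnj e = of_int T" by simp
  thus cnj: "cnj e = of_int T - e" by (simp add: algebra_simps)
  show "e * cnj e = of_int n" unfolding cnj using quad by (simp add: algebra_simps power2_eq_square)
qed

text \<open>\<open>4 (Im e)^2 = 4 n - T^2\<close> is a positive integer.\<close>

lemma nonreal_quadratic_Im_power2_ge: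
  fixes e :: complex
  assumes Im: "Im e \<noteq> 0" and quad: "e^2 = of_int T * e - of_int n"
  shows "(Im e)^2 \<ge> 1/4"
proof -
  have "complex_of_real (2 * Re e) = of_int T"
    using nonreal_quadratic_vieta(1)[OF assms] by (simp add: complex_eq_iff)
  hence trace: "2 * Re e = of_int T" by (metis of_real_eq_iff of_real_of_int_eq)
  have "complex_of_real ((Re e)^2 + (Im e)^2) = of_int n"
    using nonreal_quadratic_vieta(2)[OF assms] complex_mult_cnj by metis
  hence norm: "(Re e)^2 + (Im e)^2 = of_int n" by (metis of_real_eq_iff of_real_of_int_eq)
  have "4 * (Im e)^2 = 4 * ((Re e)^2 + (Im e)^2) - (2 * Re e)^2" by (simp add: power2_eq_square)
  hence disc: "4 * (Im e)^2 = of_int (4 * n - T^2)" unfolding norm trace by simp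
  moreover have "(Im e)^2 > 0" using Im by simp
  ultimately have "real_of_int (4 * n - T^2) > 0" by linarith
  hence "4 * n - T^2 > 0" by (simp only: of_int_0_less_iff)
  hence "real_of_int (4 * n - T^2) \<ge> 1" by linarith
  with disc show ?thesis by simp
qed

section \<open>Lattices, torsion points and endomorphisms\<close>

locale lattice_basis =
  fixes w1 w2 :: complex
  assumes nondeg: "Im (w2 / w1) \<noteq> 0"
begin

abbreviation "L \<equiv> lattice_gen w1 w2"
abbreviation "R \<equiv> End_ring L"

lemma w1_nonzero: "w1 \<noteq> 0"
  using nondeg by auto

lemma basis_coords_eq:
  assumes "of_int a * w1 + of_int b * w2 = of_int c * w1 + of_int d * w2"
  shows "a = c \<and> b = d"
proof -
  have "(of_int (a - c) * w1 + of_int (b - d) * w2) / w1 = 0" using assms by (simp add: algebra_simps)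
  hence "of_int (a - c) + of_int (b - d) * (w2 / w1) = 0" using w1_nonzero by (simp add: field_simps)
  from nonreal_indep_int[OF nondeg this] show ?thesis by simp
qed

lemma mem_L_iff: "x \<in> L \<longleftrightarrow> (\<exists>a b :: int. x = of_int a * w1 + of_int b * w2)"
  unfolding lattice_gen_def by auto

lemma int_comb_in_L: "of_int a * w1 + of_int b * w2 \<in> L"
  unfolding mem_L_iff by blast

lemma w1_in_L: "w1 \<in> L" and w2_in_L: "w2 \<in> L"
  using int_comb_in_L[of 1 0] int_comb_in_L[of 0 1] by simp_all

lemma L_zero: "0 \<in> L"
  using int_comb_in_L[of 0 0] by simp

lemma L_add: "x \<in> L \<Longrightarrow> y \<in> L \<Longrightarrow> x + y \<in> L"
  unfolding mem_L_iff by (auto, rule_tac x="a+aa" in exI, rule_tac x="b+ba" in exI, simp add: algebra_simps)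

lemma L_int_mult: "x \<in> L \<Longrightarrow> of_int k * x \<in> L"
  unfolding mem_L_iff by (auto, rule_tac x="k*a" in exI, rule_tac x="k*b" in exI, simp add: algebra_simps)

lemma L_uminus: "x \<in> L \<Longrightarrow> - x \<in> L"
  using L_int_mult[of x "-1"] by simp

lemma L_diff: "x \<in> L \<Longrightarrow> y \<in> L \<Longrightarrow> x - y \<in> L"
  using L_add[OF _ L_uminus] by simp

definition tors_pt :: "nat \<Rightarrow> int \<Rightarrow> int \<Rightarrow> complex" where
  "tors_pt N x1 x2 = (of_int x1 * w1 + of_int x2 * w2) / of_nat N"

lemma tors_pt_in_L_iff:
  assumes "N > 0"
  shows "tors_pt N x1 x2 \<in> L \<longleftrightarrow> int N dvd x1 \<and> int N dvd x2"
proof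
  assume "tors_pt N x1 x2 \<in> L"
  then obtain a b :: int where "tors_pt N x1 x2 = of_int a * w1 + of_int b * w2" unfolding mem_L_iff by blast
  hence "of_int x1 * w1 + of_int x2 * w2 = of_int (int N * a) * w1 + of_int (int N * b) * w2"
    using assms unfolding tors_pt_def by (simp add: field_simps)
  from basis_coords_eq[OF this] show "int N dvd x1 \<and> int N dvd x2" by simp
next
  assume "int N dvd x1 \<and> int N dvd x2"
  then obtain a b where "x1 = int N * a" "x2 = int N * b" by (auto simp: dvd_def)
  hence "tors_pt N x1 x2 = of_int a * w1 + of_int b * w2" using assms unfolding tors_pt_def by (simp add: field_simps)
  thus "tors_pt N x1 x2 \<in> L" by (simp add: int_comb_in_L)
qed

lemma torsion_iff_tors_pt:
  assumes "N > 0"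
  shows "y \<in> torsion N L \<longleftrightarrow> (\<exists>x1 x2. y = tors_pt N x1 x2)"
proof
  assume "y \<in> torsion N L"
  then obtain a b :: int where "of_nat N * y = of_int a * w1 + of_int b * w2"
    unfolding torsion_def mem_L_iff by auto
  hence "y = tors_pt N a b" unfolding tors_pt_def using assms by (simp add: field_simps)
  thus "\<exists>x1 x2. y = tors_pt N x1 x2" by blast
next
  assume "\<exists>x1 x2. y = tors_pt N x1 x2"
  thus "y \<in> torsion N L" unfolding torsion_def tors_pt_def using assms by (auto simp: int_comb_in_L)
qed

lemma tors_pt_linear: "tors_pt N x1 x2 = of_int x1 * tors_pt N 1 0 + of_int x2 * tors_pt N 0 1"
  unfolding tors_pt_def by (simp add: divide_inverse algebra_simps)

lemma mult_tors_pt: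
  assumes "c * w1 = of_int p * w1 + of_int q * w2" and "c * w2 = of_int r * w1 + of_int s * w2"
  shows "c * tors_pt N x1 x2 = tors_pt N (x1 * p + x2 * r) (x1 * q + x2 * s)"
proof -
  have "c * (of_int x1 * w1 + of_int x2 * w2) = of_int x1 * (c * w1) + of_int x2 * (c * w2)"
    by (simp add: algebra_simps)
  also have "\<dots> = of_int (x1 * p + x2 * r) * w1 + of_int (x1 * q + x2 * s) * w2"
    unfolding assms by (simp add: algebra_simps)
  finally show ?thesis unfolding tors_pt_def by (simp add: divide_inverse mult.assoc[symmetric])
qed

lemma torsion_int_mult: "x \<in> torsion N L \<Longrightarrow> of_int k * x \<in> torsion N L"
  unfolding torsion_def using L_int_mult by (simp add: mult.left_commute)

lemma End_ring_iff: "e \<in> R \<longleftrightarrow> e * w1 \<in> L \<and> e * w2 \<in> L"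
proof
  assume "e \<in> R"
  thus "e * w1 \<in> L \<and> e * w2 \<in> L" unfolding End_ring_def using w1_in_L w2_in_L by auto
next
  assume h: "e * w1 \<in> L \<and> e * w2 \<in> L"
  have "e * (of_int a * w1 + of_int b * w2) \<in> L" for a b
    using L_add[OF L_int_mult[of "e * w1" a] L_int_mult[of "e * w2" b]] h by (simp add: algebra_simps)
  thus "e \<in> R" unfolding End_ring_def by (auto simp: mem_L_iff[of "e * _"] lattice_gen_def)
qed

lemma End_ringD: "e \<in> R \<Longrightarrow> x \<in> L \<Longrightarrow> e * x \<in> L"
  unfolding End_ring_def by auto

lemma End_ring_coords:
  assumes "e \<in> R"
  obtains p q r s :: int
  where "e * w1 = of_int p * w1 + of_int q * w2" and "e * w2 = of_int r * w1 + of_int s * w2"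
  using assms unfolding End_ring_iff mem_L_iff by blast

lemma End_ring_of_int: "of_int k \<in> R"
  unfolding End_ring_iff by (simp add: L_int_mult w1_in_L w2_in_L)

lemma End_ring_add: "e \<in> R \<Longrightarrow> e' \<in> R \<Longrightarrow> e + e' \<in> R"
  unfolding End_ring_iff by (simp add: distrib_right L_add)

lemma End_ring_mult: "e \<in> R \<Longrightarrow> e' \<in> R \<Longrightarrow> e * e' \<in> R"
  unfolding End_ring_iff by (metis End_ringD End_ring_iff mult.assoc)

lemma End_ring_int_mult: "e \<in> R \<Longrightarrow> of_int k * e \<in> R"
  using End_ring_mult End_ring_of_int by blast

lemma End_ring_diff: "e \<in> R \<Longrightarrow> e' \<in> R \<Longrightarrow> e - e' \<in> R"
  using End_ring_add[OF _ End_ring_int_mult[of e' "-1"]] by simp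

lemma End_ring_charpoly:
  assumes "e \<in> R"
  obtains T n :: int where "e^2 = of_int T * e - of_int n"
proof -
  obtain p q r s :: int where h1: "e * w1 = of_int p * w1 + of_int q * w2"
    and h2: "e * w2 = of_int r * w1 + of_int s * w2" using End_ring_coords[OF assms] by blast
  have "(e - of_int s) * ((e - of_int p) * w1) = of_int q * ((e - of_int s) * w2)"
    using h1 by (simp add: algebra_simps)
  also have "(e - of_int s) * w2 = of_int r * w1" using h2 by (simp add: algebra_simps)
  finally have "((e - of_int s) * (e - of_int p) - of_int q * of_int r) * w1 = 0" by (simp add: algebra_simps)
  hence "(e - of_int s) * (e - of_int p) - of_int q * of_int r = 0" using w1_nonzero by simp
  hence "e^2 = of_int (p + s) * e - of_int (p * s - q * r)" by (simp add: algebra_simps power2_eq_square)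
  thus ?thesis using that by blast
qed

lemma End_ring_coords_tau:
  assumes "e \<in> R"
  obtains p q :: int where "e = of_int p + of_int q * (w2 / w1)"
proof -
  obtain p q r s :: int where "e * w1 = of_int p * w1 + of_int q * w2" using End_ring_coords[OF assms] by blast
  hence "e = of_int p + of_int q * (w2 / w1)" using w1_nonzero by (simp add: field_simps)
  thus ?thesis using that by blast
qed

lemma End_ring_real_imp_int:
  assumes "e \<in> R" and "Im e = 0"
  obtains k :: int where "e = of_int k"
proof -
  obtain p q :: int where e: "e = of_int p + of_int q * (w2 / w1)" using End_ring_coords_tau[OF assms(1)] by blast
  hence "Im e = of_int q * Im (w2 / w1)" by (simp del: times_divide_eq_right)
  hence "q = 0" using assms(2) nondeg by simp
  thus ?thesis using e that by simp
qed

lemma End_ring_cnj: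
  assumes "e \<in> R"
  shows "cnj e \<in> R"
proof (cases "Im e = 0")
  case True
  thus ?thesis using assms by (metis End_ring_real_imp_int complex_cnj_of_int)
next
  case False
  obtain T n where "e^2 = of_int T * e - of_int n" using End_ring_charpoly[OF assms] by blast
  hence "cnj e = of_int T - e" using nonreal_quadratic_vieta(3)[OF False] by blast
  thus ?thesis using End_ring_diff[OF End_ring_of_int assms] by simp
qed

lemma End_ring_div_N:
  assumes "N > 0" and "\<And>x. x \<in> torsion N L \<Longrightarrow> e * x \<in> L"
  shows "e / of_nat N \<in> R"
proof -
  have "x / of_nat N \<in> torsion N L" if "x \<in> L" for x
    using that assms(1) unfolding torsion_def by simp
  hence "e * (w1 / of_nat N) \<in> L" "e * (w2 / of_nat N) \<in> L" using assms(2) w1_in_L w2_in_L by blast+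
  thus ?thesis unfolding End_ring_iff by (simp add: divide_inverse mult_ac)
qed

lemma torsion_End_ring: "e \<in> R \<Longrightarrow> x \<in> torsion N L \<Longrightarrow> e * x \<in> torsion N L"
  unfolding torsion_def using End_ringD by (simp add: mult.left_commute)

end

section \<open>Integral elements of an imaginary quadratic field\<close>

text \<open>For \<open>\<omega>^2 = T \<omega> - n\<close>, the element \<open>a + b \<omega>\<close> has trace \<open>2 a + b T\<close> and norm
  \<open>a^2 + a b T + b^2 n\<close>; it is integral iff both are integers.\<close>

definition integral_coords :: "int \<Rightarrow> int \<Rightarrow> rat \<Rightarrow> rat \<Rightarrow> bool" where
  "integral_coords T n a b \<longleftrightarrow> 2*a + b * of_int T \<in> \<int> \<and> a^2 + a*b*of_int T + b^2 * of_int n \<in> \<int>"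

lemma integral_coordsE:
  assumes "integral_coords T n a b"
  obtains t s :: int where "2*a + b * of_int T = of_int t" and "a^2 + a*b*of_int T + b^2 * of_int n = of_int s"
  using assms unfolding integral_coords_def by (auto elim!: Ints_cases)

lemma integral_coords_disc_square:
  fixes a b :: rat
  assumes "2*a + b * of_int T = of_int t" and "a^2 + a*b*of_int T + b^2 * of_int n = of_int s"
  shows "b^2 * of_int (T^2 - 4*n) = of_int (t^2 - 4*s)"
proof -
  have "b^2 * of_int (T^2 - 4*n) = (2*a + b * of_int T)^2 - 4 * (a^2 + a*b*of_int T + b^2 * of_int n)"
    by (simp add: algebra_simps power2_eq_square)
  also have "\<dots> = of_int (t^2 - 4*s)" unfolding assms by simp
  finally show ?thesis .
qed

lemma integral_coords_disc:
  assumes "integral_coords T n a b"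
  shows "b * of_int (T^2 - 4*n) \<in> \<int>"
proof -
  define D where "D = T^2 - 4*n"
  obtain t s where "2*a + b * of_int T = of_int t" and "a^2 + a*b*of_int T + b^2 * of_int n = of_int s"
    using integral_coordsE[OF assms] .
  hence disc: "b^2 * of_int D = of_int (t^2 - 4*s)" unfolding D_def by (rule integral_coords_disc_square)
  have "(b * of_int D)^2 = (b^2 * of_int D) * of_int D" by (simp add: power2_eq_square)
  also have "\<dots> = of_int ((t^2 - 4*s) * D)" unfolding disc by simp
  finally have "(b * of_int D)^2 \<in> \<int>" by simp
  thus ?thesis unfolding D_def by (rule rat_Ints_if_power2_Ints)
qed

lemma integral_coords_of_int: "integral_coords T n (of_int i) (of_int j)"
  unfolding integral_coords_def by (metis Ints_add Ints_mult Ints_of_int Ints_power Ints_numeral)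

lemma integral_coords_zero_imp_Ints: "integral_coords T n a 0 \<Longrightarrow> a \<in> \<int>"
  unfolding integral_coords_def by (auto intro: rat_Ints_if_power2_Ints)

lemma integral_coords_int_mult:
  assumes "integral_coords T n a b"
  shows "integral_coords T n (of_int k * a) (of_int k * b)"
proof -
  have "2 * (of_int k * a) + of_int k * b * of_int T = of_int k * (2*a + b * of_int T)"
    by (simp add: algebra_simps)
  moreover have "(of_int k * a)^2 + (of_int k * a) * (of_int k * b) * of_int T + (of_int k * b)^2 * of_int n
     = of_int (k^2) * (a^2 + a*b*of_int T + b^2 * of_int n)"
    by (simp add: algebra_simps power2_eq_square)
  ultimately show ?thesis using assms unfolding integral_coords_def by (metis Ints_mult Ints_of_int)
qed

text \<open>The trace of \<open>z1 * cnj z2\<close> is integral: twice it equals \<open>t1 t2 - b1 b2 D\<close>, and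
  \<open>(b1 b2 D)^2 = (t1^2 - 4 s1)(t2^2 - 4 s2)\<close> forces \<open>b1 b2 D\<close> to be an integer of the
  same parity as \<open>t1 t2\<close>.\<close>

lemma integral_coords_cross_trace:
  assumes "integral_coords T n a1 b1" and "integral_coords T n a2 b2"
  shows "2*a1*a2 + (a1*b2 + a2*b1) * of_int T + 2*b1*b2*of_int n \<in> \<int>"
proof -
  define D where "D = T^2 - 4*n"
  obtain t1 s1 where t1: "2*a1 + b1 * of_int T = of_int t1"
    and s1: "a1^2 + a1*b1*of_int T + b1^2 * of_int n = of_int s1" using integral_coordsE[OF assms(1)] .
  obtain t2 s2 where t2: "2*a2 + b2 * of_int T = of_int t2"
    and s2: "a2^2 + a2*b2*of_int T + b2^2 * of_int n = of_int s2" using integral_coordsE[OF assms(2)] .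
  have W1: "b1^2 * of_int D = of_int (t1^2 - 4*s1)"
    unfolding D_def by (rule integral_coords_disc_square[OF t1 s1])
  have W2: "b2^2 * of_int D = of_int (t2^2 - 4*s2)"
    unfolding D_def by (rule integral_coords_disc_square[OF t2 s2])
  have sq: "(b1*b2*of_int D)^2 = of_int ((t1^2 - 4*s1) * (t2^2 - 4*s2))"
  proof -
    have "(b1*b2*of_int D)^2 = (b1^2 * of_int D) * (b2^2 * of_int D)" by (simp add: algebra_simps power2_eq_square)
    also have "\<dots> = of_int (t1^2 - 4*s1) * of_int (t2^2 - 4*s2)" by (simp only: W1 W2)
    finally show ?thesis by simp
  qed
  have "(b1*b2*of_int D)^2 \<in> \<int>" unfolding sq by simp
  hence "b1*b2*of_int D \<in> \<int>" by (rule rat_Ints_if_power2_Ints)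
  then obtain P :: int where P: "b1*b2*of_int D = of_int P" by (auto elim!: Ints_cases)
  have "(of_int (P^2) :: rat) = (b1*b2*of_int D)^2" unfolding P by simp
  hence "(of_int (P^2) :: rat) = of_int ((t1^2 - 4*s1) * (t2^2 - 4*s2))" unfolding sq .
  hence PP: "P^2 = (t1^2 - 4*s1) * (t2^2 - 4*s2)" by (simp only: of_int_eq_iff)
  have "even (t1*t2 - P)"
  proof (rule ccontr)
    assume odd: "odd (t1*t2 - P)"
    have "odd ((t1*t2 - P) + 2*P)" using odd by simp
    hence "odd (t1*t2 + P)" by (simp add: algebra_simps)
    moreover have "(t1*t2 - P) * (t1*t2 + P) = 4 * (s1 * t2^2 + s2 * t1^2 - 4*s1*s2)"
      using PP by (simp add: algebra_simps power2_eq_square)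
    hence "even ((t1*t2 - P) * (t1*t2 + P))" by simp
    ultimately show False using odd by simp
  qed
  then obtain X where X: "t1*t2 - P = 2 * X" by blast
  have "2 * (2*a1*a2 + (a1*b2 + a2*b1) * of_int T + 2*b1*b2*of_int n)
      = (2*a1 + b1 * of_int T) * (2*a2 + b2 * of_int T) - b1*b2*of_int D"
    unfolding D_def by (simp add: algebra_simps power2_eq_square)
  also have "\<dots> = of_int (2 * X)" unfolding t1 t2 P X[symmetric] by simp
  finally have "2*a1*a2 + (a1*b2 + a2*b1) * of_int T + 2*b1*b2*of_int n = of_int X" by simp
  thus ?thesis by simp
qed

lemma integral_coords_diff:
  assumes "integral_coords T n a1 b1" and "integral_coords T n a2 b2"
  shows "integral_coords T n (a1 - a2) (b1 - b2)"
proof -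
  obtain t1 s1 where t1: "2*a1 + b1 * of_int T = of_int t1"
    and s1: "a1^2 + a1*b1*of_int T + b1^2 * of_int n = of_int s1" using integral_coordsE[OF assms(1)] .
  obtain t2 s2 where t2: "2*a2 + b2 * of_int T = of_int t2"
    and s2: "a2^2 + a2*b2*of_int T + b2^2 * of_int n = of_int s2" using integral_coordsE[OF assms(2)] .
  obtain X where X: "2*a1*a2 + (a1*b2 + a2*b1) * of_int T + 2*b1*b2*of_int n = of_int X"
    using integral_coords_cross_trace[OF assms] by (auto elim!: Ints_cases)
  have "2*(a1 - a2) + (b1 - b2) * of_int T = (2*a1 + b1 * of_int T) - (2*a2 + b2 * of_int T)"
    by (simp add: algebra_simps)
  also have "\<dots> = of_int (t1 - t2)" unfolding t1 t2 by simp
  finally have trace: "2*(a1 - a2) + (b1 - b2) * of_int T = of_int (t1 - t2)" .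
  have "(a1 - a2)^2 + (a1 - a2)*(b1 - b2)*of_int T + (b1 - b2)^2 * of_int n
     = (a1^2 + a1*b1*of_int T + b1^2 * of_int n) + (a2^2 + a2*b2*of_int T + b2^2 * of_int n)
       - (2*a1*a2 + (a1*b2 + a2*b1) * of_int T + 2*b1*b2*of_int n)"
    by (simp add: algebra_simps power2_eq_square)
  also have "\<dots> = of_int (s1 + s2 - X)" unfolding s1 s2 X by simp
  finally show ?thesis using trace unfolding integral_coords_def by (metis Ints_of_int)
qed

text \<open>At an odd prime not dividing the discriminant, \<open>N\<close>-torsion of \<open>O_K / Z[\<omega>]\<close> is trivial.\<close>

lemma integral_coords_torsion_free:
  fixes N :: nat
  assumes N: "prime N" "N \<noteq> 2" and disc: "\<not> int N dvd (T^2 - 4*n)"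
    and "integral_coords T n a b" and "of_nat N * a \<in> \<int>" and "of_nat N * b \<in> \<int>"
  shows "a \<in> \<int> \<and> b \<in> \<int>"
proof -
  have N_pos: "N > 0" and pN: "prime (int N)" using N prime_gt_0_nat by auto
  have N_not_dvd_2: "\<not> int N dvd 2"
  proof
    assume "int N dvd 2"
    hence "N \<le> 2" using int_dvd_int_iff[of N 2] by (simp add: dvd_imp_le)
    thus False using N prime_ge_2_nat[of N] by simp
  qed
  obtain i j where "of_nat N * a = of_int i" "of_nat N * b = of_int j"
    using assms(5,6) by (auto elim!: Ints_cases)
  hence a: "a = of_int i / of_nat N" and b: "b = of_int j / of_nat N" using N_pos by (simp_all add: field_simps)
  obtain t s :: int where t: "2*a + b * of_int T = of_int t"
    and s: "a^2 + a*b*of_int T + b^2 * of_int n = of_int s" using integral_coordsE[OF assms(4)] .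
  have "of_int (2*i + j*T) = (of_int (int N * t) :: rat)"
    using t unfolding a b using N_pos by (simp add: field_simps)
  hence d1: "int N dvd 2*i + j*T" by (simp only: of_int_eq_iff) simp
  have "of_int (i^2 + i*j*T + j^2*n) = (of_int (int N * (int N * s)) :: rat)"
    using s unfolding a b using N_pos by (simp add: field_simps power2_eq_square)
  hence d2: "int N dvd i^2 + i*j*T + j^2*n" by (simp only: of_int_eq_iff) simp
  have "j^2 * (T^2 - 4*n) = (2*i + j*T)^2 - 4 * (i^2 + i*j*T + j^2*n)"
    by (simp add: algebra_simps power2_eq_square)
  moreover have "int N dvd (2*i + j*T)^2" using d1 by (simp add: power2_eq_square)
  moreover have "int N dvd 4 * (i^2 + i*j*T + j^2*n)" using d2 by (rule dvd_mult)
  ultimately have "int N dvd j^2 * (T^2 - 4*n)" by (simp only:) (rule dvd_diff)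
  hence "int N dvd j^2" using disc prime_dvd_mult_iff[OF pN] by blast
  hence j: "int N dvd j" using prime_dvd_power[OF pN] by blast
  hence "int N dvd 2 * i" using d1 by (simp add: dvd_add_left_iff)
  hence "int N dvd i" using N_not_dvd_2 pN by (simp add: prime_dvd_mult_iff)
  with j obtain i' j' where "i = int N * i'" "j = int N * j'" unfolding dvd_def by blast
  hence "a = of_int i'" "b = of_int j'" using a b N_pos by simp_all
  thus ?thesis by simp
qed


text \<open>Hermite normal form: reduce the second coordinate modulo the least positive one.\<close>

lemma integral_coords_least_second_coord:
  fixes K :: int and j0 :: nat
  assumes K: "K > 0" and j0: "j0 > 0" and a0: "integral_coords T n a0 (of_nat j0 / of_int K)"
    and denom: "\<And>a b. integral_coords T n a b \<Longrightarrow> of_int K * b \<in> \<int>"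
    and least: "\<And>j a. 0 < j \<Longrightarrow> j < j0 \<Longrightarrow> \<not> integral_coords T n a (of_nat j / of_int K)"
    and ab: "integral_coords T n a b"
  shows "\<exists>q i :: int. a = of_int i + of_int q * a0 \<and> b = of_int q * of_nat j0 / of_int K"
proof -
  obtain J where J: "of_int K * b = of_int J" using denom[OF ab] by (auto elim!: Ints_cases)
  define q where "q = J div int j0"
  define r where "r = J mod int j0"
  have r: "0 \<le> r" "r < int j0" unfolding r_def using j0 by simp_all
  have rest: "integral_coords T n (a - of_int q * a0) (b - of_int q * (of_nat j0 / of_int K))"
    by (rule integral_coords_diff[OF ab integral_coords_int_mult[OF a0]])
  have "J = q * int j0 + r" unfolding q_def r_def by simp
  hence rest_b: "b - of_int q * (of_nat j0 / of_int K) = of_nat (nat r) / of_int K"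
    using J K r by (simp add: field_simps)
  have "r = 0" using least[of "nat r"] rest rest_b r by (metis nat_less_iff order_le_less zero_less_nat_eq)
  hence b: "b = of_int q * of_nat j0 / of_int K" using rest_b by simp
  have "a - of_int q * a0 \<in> \<int>" using rest rest_b \<open>r = 0\<close> by (simp add: integral_coords_zero_imp_Ints)
  then obtain i where "a - of_int q * a0 = of_int i" by (auto elim!: Ints_cases)
  thus ?thesis using b by (metis diff_add_cancel add.commute)
qed

lemma integral_coords_basis:
  assumes disc: "T^2 - 4*n \<noteq> 0"
  obtains a0 :: rat and f :: nat where "f > 0" and "integral_coords T n a0 (1 / of_nat f)"
    and "\<And>a b. integral_coords T n a b \<Longrightarrow> \<exists>q i :: int. a = of_int i + of_int q * a0 \<and> b = of_int q / of_nat f"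
proof -
  define K where "K = \<bar>T^2 - 4*n\<bar>"
  have K: "K > 0" using disc K_def by simp
  have denom: "of_int K * b \<in> \<int>" if ab: "integral_coords T n a b" for a b
  proof -
    have "of_int K * b = b * of_int (T^2 - 4*n) \<or> of_int K * b = - (b * of_int (T^2 - 4*n))"
      unfolding K_def by (cases "T^2 - 4*n \<ge> 0") (simp_all add: algebra_simps)
    thus ?thesis using integral_coords_disc[OF ab] by (metis Ints_minus)
  qed
  define S where "S j \<longleftrightarrow> 0 < j \<and> (\<exists>a. integral_coords T n a (of_nat j / of_int K))" for j :: nat
  have "S (nat K)" unfolding S_def using K integral_coords_of_int[of T n 0 1] by auto
  hence "S (LEAST j. S j)" by (rule LeastI)
  then obtain j0 a0 where j0: "j0 = (LEAST j. S j)" "0 < j0" and a0: "integral_coords T n a0 (of_nat j0 / of_int K)"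
    unfolding S_def by blast
  have least: "\<not> integral_coords T n a (of_nat j / of_int K)" if "0 < j" "j < j0" for j a
    using not_less_Least[of j S] that unfolding j0(1) S_def by blast
  have basis: "\<exists>q i :: int. a = of_int i + of_int q * a0 \<and> b = of_int q * of_nat j0 / of_int K"
    if "integral_coords T n a b" for a b
    using K j0(2) a0 denom least that by (rule integral_coords_least_second_coord)
  obtain q1 where "(1::rat) = of_int q1 * of_nat j0 / of_int K"
    using basis[OF integral_coords_of_int[of T n 0 1]] by auto
  hence K_eq: "K = q1 * int j0" using K by (simp add: field_simps) (metis of_int_eq_iff of_int_mult of_int_of_nat_eq)
  hence q1: "q1 > 0" using K j0(2) by (simp add: zero_less_mult_iff)
  have j0_div_K: "of_nat j0 / of_int K = 1 / (of_nat (nat q1) :: rat)" using K_eq q1 j0(2) by (simp add: field_simps)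
  show ?thesis
  proof (rule that[of "nat q1" a0])
    show "nat q1 > 0" "integral_coords T n a0 (1 / of_nat (nat q1))" using q1 a0 j0_div_K by simp_all
    fix a b assume "integral_coords T n a b"
    from basis[OF this] obtain q i where "a = of_int i + of_int q * a0" "b = of_int q * (of_nat j0 / of_int K)"
      by auto
    thus "\<exists>q i :: int. a = of_int i + of_int q * a0 \<and> b = of_int q / of_nat (nat q1)" unfolding j0_div_K by auto
  qed
qed

section \<open>The order \<open>\<int>[\<omega>]\<close> and its conductor\<close>

lemma coset_eq_iff:
  fixes S :: "'a::ab_group_add set"
  assumes "0 \<in> S" and diff: "\<And>x y. x \<in> S \<Longrightarrow> y \<in> S \<Longrightarrow> x - y \<in> S"
  shows "{x + y |y. y \<in> S} = {x' + y |y. y \<in> S} \<longleftrightarrow> x - x' \<in> S"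
proof
  assume "{x + y |y. y \<in> S} = {x' + y |y. y \<in> S}"
  moreover have "x \<in> {x + y |y. y \<in> S}" using \<open>0 \<in> S\<close> by force
  ultimately obtain y where "y \<in> S" "x = x' + y" by blast
  thus "x - x' \<in> S" by simp
next
  have add: "u + v \<in> S" if "u \<in> S" "v \<in> S" for u v
    using diff[OF that(1) diff[OF \<open>0 \<in> S\<close> that(2)]] by simp
  have sub: "{x + y |y. y \<in> S} \<subseteq> {x' + y |y. y \<in> S}" if "x - x' \<in> S" for x x'
  proof
    fix z assume "z \<in> {x + y |y. y \<in> S}"
    then obtain y where "y \<in> S" "z = x' + ((x - x') + y)" by force
    thus "z \<in> {x' + y |y. y \<in> S}" using add[OF that] by blast
  qed
  assume "x - x' \<in> S"
  moreover have "x' - x \<in> S" using diff[OF \<open>0 \<in> S\<close> \<open>x - x' \<in> S\<close>] by simp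
  ultimately show "{x + y |y. y \<in> S} = {x' + y |y. y \<in> S}" using sub by blast
qed

locale quadratic_order =
  fixes \<omega> :: complex and T n :: int
  assumes Im_omega: "Im \<omega> \<noteq> 0" and omega_quad: "\<omega>^2 = of_int T * \<omega> - of_int n"
begin

abbreviation "Z\<omega> \<equiv> lattice_gen 1 \<omega>"
abbreviation "K \<equiv> quad_field \<omega>"

lemma cnj_omega: "cnj \<omega> = of_int T - \<omega>"
  using nonreal_quadratic_vieta(3)[OF Im_omega omega_quad] .

lemma disc_nonzero: "T^2 - 4*n \<noteq> 0"
proof
  assume disc: "T^2 - 4*n = 0"
  have "(\<omega> - cnj \<omega>)^2 = (\<omega> + cnj \<omega>)^2 - 4 * (\<omega> * cnj \<omega>)" by (simp add: algebra_simps power2_eq_square)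
  also have "\<dots> = of_int (T^2 - 4*n)" using nonreal_quadratic_vieta[OF Im_omega omega_quad] by simp
  also have "\<dots> = 0" using disc by simp
  finally have "\<omega> = cnj \<omega>" by simp
  thus False using Im_omega by (metis Reals_cnj_iff complex_is_Real_iff)
qed

lemma mem_Z\<omega>_iff: "z \<in> Z\<omega> \<longleftrightarrow> (\<exists>i j :: int. z = of_int i + of_int j * \<omega>)"
  unfolding lattice_gen_def by auto

lemma mem_K_iff: "z \<in> K \<longleftrightarrow> (\<exists>a b. z = of_rat a + of_rat b * \<omega>)"
  unfolding quad_field_def by auto

lemma rat_coords_eq:
  assumes "of_rat a + of_rat b * \<omega> = of_rat a' + of_rat b' * \<omega>"
  shows "a = a' \<and> b = b'"
proof -
  have "of_rat (a - a') + of_rat (b - b') * \<omega> = 0" using assms by (simp add: of_rat_diff algebra_simps)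
  from nonreal_indep_rat[OF Im_omega this] show ?thesis by simp
qed

lemma rat_coords_in_Z\<omega>_iff: "of_rat a + of_rat b * \<omega> \<in> Z\<omega> \<longleftrightarrow> a \<in> \<int> \<and> b \<in> \<int>"
proof
  assume "of_rat a + of_rat b * \<omega> \<in> Z\<omega>"
  then obtain i j :: int where "of_rat a + of_rat b * \<omega> = of_rat (of_int i) + of_rat (of_int j) * \<omega>"
    unfolding mem_Z\<omega>_iff by auto
  from rat_coords_eq[OF this] show "a \<in> \<int> \<and> b \<in> \<int>" by simp
next
  assume "a \<in> \<int> \<and> b \<in> \<int>"
  then obtain i j where "a = of_int i" "b = of_int j" by (auto elim!: Ints_cases)
  thus "of_rat a + of_rat b * \<omega> \<in> Z\<omega>" unfolding mem_Z\<omega>_iff by auto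
qed

lemma alg_int_iff_integral_coords: "alg_int (of_rat a + of_rat b * \<omega>) \<longleftrightarrow> integral_coords T n a b"
proof -
  define z where "z = of_rat a + of_rat b * \<omega>"
  have cnj_z: "cnj z = of_rat a + of_rat b * (of_int T - \<omega>)" unfolding z_def using cnj_omega by simp
  have trace: "of_rat (2*a + b * of_int T) = z + cnj z" unfolding cnj_z unfolding z_def
    by (simp add: of_rat_add of_rat_mult algebra_simps)
  have "z * cnj z = of_rat a * of_rat a + of_rat a * of_rat b * of_int T + of_rat b * of_rat b * (\<omega> * (of_int T - \<omega>))"
    unfolding cnj_z unfolding z_def by (simp add: algebra_simps)
  also have "\<omega> * (of_int T - \<omega>) = of_int n" using omega_quad by (simp add: algebra_simps power2_eq_square)
  finally have norm: "of_rat (a^2 + a*b*of_int T + b^2 * of_int n) = z * cnj z"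
    by (simp add: of_rat_add of_rat_mult power2_eq_square)
  show ?thesis
  proof
    assume "alg_int (of_rat a + of_rat b * \<omega>)"
    with alg_int_trace_norm_Ints[OF trace norm] show "integral_coords T n a b"
      unfolding integral_coords_def z_def by simp
  next
    assume "integral_coords T n a b"
    then obtain t s :: int where t: "2*a + b * of_int T = of_int t"
      and s: "a^2 + a*b*of_int T + b^2 * of_int n = of_int s" by (rule integral_coordsE)
    have "poly (map_poly of_int [:s, -t, 1:]) z = of_int s - of_int t * z + z^2"
      by (simp add: map_poly_pCons algebra_simps power2_eq_square)
    also have "\<dots> = 0" using trace norm unfolding t s by (simp add: algebra_simps power2_eq_square)
    finally show "alg_int (of_rat a + of_rat b * \<omega>)"
      unfolding alg_int_def z_def[symmetric] by (intro exI[of _ "[:s, -t, 1:]"]) simp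
  qed
qed

lemma mem_ring_of_integers_iff:
  "z \<in> ring_of_integers K \<longleftrightarrow> (\<exists>a b. z = of_rat a + of_rat b * \<omega> \<and> integral_coords T n a b)"
  unfolding ring_of_integers_def mem_K_iff using alg_int_iff_integral_coords by auto

lemma of_int_in_Z\<omega>: "of_int k \<in> Z\<omega>"
  unfolding mem_Z\<omega>_iff by (rule exI[of _ k], rule exI[of _ 0]) simp

lemma Z\<omega>_add: "x \<in> Z\<omega> \<Longrightarrow> y \<in> Z\<omega> \<Longrightarrow> x + y \<in> Z\<omega>"
  unfolding mem_Z\<omega>_iff by (auto, rule_tac x="i+ia" in exI, rule_tac x="j+ja" in exI, simp add: algebra_simps)

lemma Z\<omega>_diff: "x \<in> Z\<omega> \<Longrightarrow> y \<in> Z\<omega> \<Longrightarrow> x - y \<in> Z\<omega>"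
  unfolding mem_Z\<omega>_iff by (auto, rule_tac x="i-ia" in exI, rule_tac x="j-ja" in exI, simp add: algebra_simps)

lemma Z\<omega>_mult: "x \<in> Z\<omega> \<Longrightarrow> y \<in> Z\<omega> \<Longrightarrow> x * y \<in> Z\<omega>"
proof -
  assume "x \<in> Z\<omega>" "y \<in> Z\<omega>"
  then obtain i j k l :: int where x: "x = of_int i + of_int j * \<omega>" and y: "y = of_int k + of_int l * \<omega>"
    unfolding mem_Z\<omega>_iff by blast
  have "x * y = of_int i * of_int k + (of_int i * of_int l + of_int j * of_int k) * \<omega> + of_int j * of_int l * \<omega>^2"
    unfolding x y by (simp add: algebra_simps power2_eq_square)
  also have "\<dots> = of_int (i*k - j*l*n) + of_int (i*l + j*k + j*l*T) * \<omega>"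
    unfolding omega_quad by (simp add: algebra_simps)
  finally show ?thesis unfolding mem_Z\<omega>_iff by blast
qed

lemma imag_quad_omega: "imag_quad \<omega>"
proof -
  have "\<omega>^2 = of_rat (of_int (-n)) + of_rat (of_int T) * \<omega>" unfolding omega_quad by (simp add: of_rat_minus)
  thus ?thesis unfolding imag_quad_def mem_K_iff using Im_omega by blast
qed

lemma is_order_Z\<omega>: "is_order Z\<omega> K"
  unfolding is_order_def
proof (intro conjI)
  show "Z\<omega> \<subseteq> ring_of_integers K"
  proof
    fix z assume "z \<in> Z\<omega>"
    then obtain i j :: int where "z = of_rat (of_int i) + of_rat (of_int j) * \<omega>" unfolding mem_Z\<omega>_iff by auto
    thus "z \<in> ring_of_integers K" unfolding mem_ring_of_integers_iff using integral_coords_of_int by blast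
  qed
  show "1 \<in> Z\<omega>" using of_int_in_Z\<omega>[of 1] by simp
  show "is_lattice Z\<omega>" unfolding is_lattice_def using Im_omega by (intro exI[of _ 1] exI[of _ \<omega>]) simp
  show "\<forall>x\<in>Z\<omega>. \<forall>y\<in>Z\<omega>. x + y \<in> Z\<omega> \<and> x - y \<in> Z\<omega> \<and> x * y \<in> Z\<omega>" using Z\<omega>_add Z\<omega>_diff Z\<omega>_mult by blast
qed

context
  fixes a0 :: rat and f :: nat
  assumes f_pos: "f > 0" and theta_integral: "integral_coords T n a0 (1 / of_nat f)"
    and integral_coords_theta: "\<And>a b. integral_coords T n a b \<Longrightarrow>
      \<exists>q i :: int. a = of_int i + of_int q * a0 \<and> b = of_int q / of_nat f"
begin

abbreviation "\<theta> \<equiv> of_rat a0 + of_rat (1 / of_nat f) * \<omega>"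

lemma int_mult_theta: "of_int j * \<theta> = of_rat (of_int j * a0) + of_rat (of_int j / of_nat f) * \<omega>"
  by (simp add: of_rat_mult of_rat_divide algebra_simps)

lemma f_mult_a0_in_Ints: "of_nat f * a0 \<in> \<int>"
proof -
  have "integral_coords T n (of_int (int f) * a0) (of_int (int f) * (1 / of_nat f))"
    by (rule integral_coords_int_mult[OF theta_integral])
  hence "integral_coords T n (of_nat f * a0) 1" using f_pos by simp
  from integral_coords_diff[OF this integral_coords_of_int[of T n 0 1]]
  show ?thesis by (simp add: integral_coords_zero_imp_Ints)
qed

lemma int_mult_theta_in_Z\<omega>_iff: "of_int j * \<theta> \<in> Z\<omega> \<longleftrightarrow> int f dvd j"
proof -
  have "of_int j * a0 \<in> \<int>" if dvd: "int f dvd j" for j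
  proof -
    obtain k where "j = int f * k" using dvd by blast
    hence "of_int j * a0 = of_int k * (of_nat f * a0)" by simp
    thus ?thesis using f_mult_a0_in_Ints by (metis Ints_mult Ints_of_int)
  qed
  moreover have "of_int j / of_nat f \<in> (\<int> :: rat set) \<longleftrightarrow> int f dvd j"
    using f_pos of_int_div_of_int_in_Ints_iff[of j "int f", where 'a=rat] by simp
  ultimately show ?thesis unfolding int_mult_theta rat_coords_in_Z\<omega>_iff by blast
qed

lemma mem_ring_of_integers_iff_theta:
  "z \<in> ring_of_integers K \<longleftrightarrow> (\<exists>i q :: int. z = of_int i + of_int q * \<theta>)"
proof
  assume "z \<in> ring_of_integers K"
  then obtain a b where z: "z = of_rat a + of_rat b * \<omega>" "integral_coords T n a b"
    unfolding mem_ring_of_integers_iff by blast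
  from integral_coords_theta[OF z(2)] obtain q i :: int
    where "a = of_int i + of_int q * a0" "b = of_int q / of_nat f" by blast
  hence "of_rat a = (of_int i + of_rat (of_int q * a0) :: complex)" "of_rat b = (of_rat (of_int q / of_nat f) :: complex)"
    by (simp_all add: of_rat_add)
  hence "z = of_int i + of_int q * \<theta>" unfolding z(1) int_mult_theta by simp
  thus "\<exists>i q :: int. z = of_int i + of_int q * \<theta>" by blast
next
  assume "\<exists>i q :: int. z = of_int i + of_int q * \<theta>"
  then obtain i q :: int where z: "z = of_int i + of_int q * \<theta>" by blast
  have "integral_coords T n (of_int i - of_int (- q) * a0) (of_int 0 - of_int (- q) * (1 / of_nat f))"
    by (rule integral_coords_diff[OF integral_coords_of_int integral_coords_int_mult[OF theta_integral]])
  moreover have "z = of_rat (of_int i - of_int (- q) * a0) + of_rat (of_int 0 - of_int (- q) * (1 / of_nat f)) * \<omega>"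
    unfolding z by (simp add: of_rat_add of_rat_diff of_rat_mult of_rat_divide algebra_simps)
  ultimately show "z \<in> ring_of_integers K" unfolding mem_ring_of_integers_iff by blast
qed

text \<open>The classes of \<open>j \<theta>\<close>, \<open>0 \<le> j < f\<close>, are the cosets of \<open>\<int>[\<omega>]\<close> in \<open>O_K\<close>.\<close>

lemma conductor_eq: "conductor Z\<omega> K = f"
proof -
  define coset where "coset x = {x + y |y. y \<in> Z\<omega>}" for x
  have coset_eq_iff: "coset x = coset x' \<longleftrightarrow> x - x' \<in> Z\<omega>" for x x'
    unfolding coset_def using of_int_in_Z\<omega>[of 0] Z\<omega>_diff by (intro coset_eq_iff) auto
  have image: "coset ` ring_of_integers K = (\<lambda>j. coset (of_nat j * \<theta>)) ` {0..<f}"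
  proof (rule equalityI; rule subsetI)
    fix C assume "C \<in> coset ` ring_of_integers K"
    then obtain z where "z \<in> ring_of_integers K" and C: "C = coset z" by blast
    then obtain i q :: int where z: "z = of_int i + of_int q * \<theta>"
      unfolding mem_ring_of_integers_iff_theta by blast
    define r where "r = q mod int f"
    have r: "0 \<le> r" "r < int f" unfolding r_def using f_pos by simp_all
    have "int f dvd q - r" unfolding r_def minus_mod_eq_mult_div by simp
    hence "of_int (q - r) * \<theta> \<in> Z\<omega>" by (simp only: int_mult_theta_in_Z\<omega>_iff)
    moreover have eq: "(of_int i + of_int q * \<theta>) - of_nat (nat r) * \<theta> = of_int i + of_int (q - r) * \<theta>"
      using r by (simp add: algebra_simps)
    ultimately have "(of_int i + of_int q * \<theta>) - of_nat (nat r) * \<theta> \<in> Z\<omega>"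
      using Z\<omega>_add[OF of_int_in_Z\<omega>] by (simp only: eq)
    hence "C = coset (of_nat (nat r) * \<theta>)" unfolding C z coset_eq_iff .
    thus "C \<in> (\<lambda>j. coset (of_nat j * \<theta>)) ` {0..<f}" using r by (intro rev_image_eqI[of "nat r"]) auto
  next
    fix C assume "C \<in> (\<lambda>j. coset (of_nat j * \<theta>)) ` {0..<f}"
    then obtain j where "C = coset (of_int 0 + of_int (int j) * \<theta>)" by auto
    moreover have "of_int 0 + of_int (int j) * \<theta> \<in> ring_of_integers K"
      unfolding mem_ring_of_integers_iff_theta by blast
    ultimately show "C \<in> coset ` ring_of_integers K" by blast
  qed
  have inj: "inj_on (\<lambda>j. coset (of_nat j * \<theta>)) {0..<f}"
  proof (rule inj_onI)
    fix j j' assume j: "j \<in> {0..<f}" "j' \<in> {0..<f}" and "coset (of_nat j * \<theta>) = coset (of_nat j' * \<theta>)"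
    hence "of_int (int j - int j') * \<theta> \<in> Z\<omega>" unfolding coset_eq_iff by (simp add: algebra_simps)
    hence "int f dvd int j - int j'" by (simp only: int_mult_theta_in_Z\<omega>_iff)
    hence "int j mod int f = int j' mod int f" by (simp add: cong_iff_dvd_diff[symmetric] cong_def)
    thus "j = j'" using j by simp
  qed
  have "conductor Z\<omega> K = card (coset ` ring_of_integers K)" unfolding conductor_def coset_def ..
  also have "\<dots> = f" unfolding image card_image[OF inj] by simp
  finally show ?thesis .
qed

end

lemma conductor_coprime:
  fixes N :: nat
  assumes N: "prime N" "N \<noteq> 2" and disc: "\<not> int N dvd (T^2 - 4*n)"
  shows "coprime (conductor Z\<omega> K) N"
proof -
  obtain a0 :: rat and f :: nat where f_pos: "f > 0" and theta: "integral_coords T n a0 (1 / of_nat f)"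
    and basis: "\<And>a b. integral_coords T n a b \<Longrightarrow> \<exists>q i :: int. a = of_int i + of_int q * a0 \<and> b = of_int q / of_nat f"
    using integral_coords_basis[OF disc_nonzero] by metis
  have "\<not> N dvd f"
  proof
    assume "N dvd f"
    then obtain g where g: "f = N * g" by blast
    have N_pos: "N > 0" using N prime_gt_0_nat by blast
    have "integral_coords T n (of_int (int g) * a0) (1 / of_nat N)"
      using integral_coords_int_mult[OF theta, of "int g"] g f_pos by simp
    moreover have "of_nat N * (of_int (int g) * a0) = of_nat f * a0" using g by simp
    hence "of_nat N * (of_int (int g) * a0) \<in> \<int>" using f_mult_a0_in_Ints[OF f_pos theta basis] by (simp only:)
    moreover have "of_nat N * (1 / of_nat N) \<in> (\<int> :: rat set)" using N_pos by simp
    ultimately have "(1 / of_nat N :: rat) \<in> \<int>" using integral_coords_torsion_free[OF N disc] by blast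
    then obtain u where "(1 / of_nat N :: rat) = of_int u" by (auto elim!: Ints_cases)
    hence "int N * u = 1" using N_pos by (simp add: field_simps) (metis of_int_eq_iff of_int_of_nat_eq of_int_mult of_int_1)
    hence "int N dvd 1" by (metis dvd_triv_left)
    thus False using N by simp
  qed
  hence "coprime N f" using N by (simp add: prime_imp_coprime)
  thus ?thesis using conductor_eq[OF f_pos theta basis] by (simp add: coprime_commute)
qed

end

section \<open>Endomorphisms of a lattice with cyclic cokernel\<close>

context lattice_basis
begin

lemma End_ring_eq_lattice_gen_if_least:
  assumes j0: "j0 > 0" and \<omega>: "\<omega> = of_int p0 + of_int (int j0) * (w2 / w1)" "\<omega> \<in> R"
    and least: "\<And>j p. 0 < j \<Longrightarrow> j < j0 \<Longrightarrow> of_int p + of_int (int j) * (w2 / w1) \<notin> R"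
  shows "R = lattice_gen 1 \<omega>"
proof (rule equalityI; rule subsetI)
  fix e assume e: "e \<in> R"
  then obtain p q :: int where e_eq: "e = of_int p + of_int q * (w2 / w1)" by (rule End_ring_coords_tau)
  define k where "k = q div int j0"
  define r where "r = q mod int j0"
  have r: "0 \<le> r" "r < int j0" unfolding r_def using j0 by simp_all
  have "q = k * int j0 + r" unfolding k_def r_def by simp
  hence rest: "e - of_int k * \<omega> = of_int (p - k * p0) + of_int (int (nat r)) * (w2 / w1)"
    unfolding e_eq \<omega>(1) using r by (simp add: algebra_simps)
  moreover have "e - of_int k * \<omega> \<in> R" using End_ring_diff[OF e End_ring_int_mult[OF \<omega>(2)]] .
  ultimately have "r = 0" using least[of "nat r" "p - k * p0"] r by fastforce
  hence "e = of_int (p - k * p0) * 1 + of_int k * \<omega>" using rest by (simp add: algebra_simps)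
  thus "e \<in> lattice_gen 1 \<omega>" unfolding lattice_gen_def by blast
next
  fix e assume "e \<in> lattice_gen 1 \<omega>"
  then obtain a b :: int where "e = of_int a * 1 + of_int b * \<omega>" unfolding lattice_gen_def by blast
  thus "e \<in> R" using End_ring_add[OF End_ring_of_int End_ring_int_mult[OF \<omega>(2)]] by simp
qed

lemma End_ring_eq_lattice_gen:
  assumes c: "c \<in> R" "Im c \<noteq> 0"
  obtains \<omega> where "\<omega> \<in> R" and "Im \<omega> \<noteq> 0" and "R = lattice_gen 1 \<omega>"
proof -
  define S where "S j \<longleftrightarrow> 0 < j \<and> (\<exists>p::int. of_int p + of_int (int j) * (w2 / w1) \<in> R)" for j :: nat
  obtain p q :: int where c_eq: "c = of_int p + of_int q * (w2 / w1)" using End_ring_coords_tau[OF c(1)] .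
  have "q \<noteq> 0" using c(2) c_eq by auto
  have "S (nat \<bar>q\<bar>)"
  proof (cases "q > 0")
    case True
    thus ?thesis unfolding S_def using c(1) c_eq by (intro conjI exI[of _ p]) simp_all
  next
    case False
    have "- c = of_int (- p) + of_int (int (nat \<bar>q\<bar>)) * (w2 / w1)" using c_eq False by simp
    moreover have "- c \<in> R" using End_ring_int_mult[OF c(1), of "-1"] by simp
    ultimately show ?thesis unfolding S_def using \<open>q \<noteq> 0\<close> by (intro conjI exI[of _ "- p"]) simp_all
  qed
  hence "S (LEAST j. S j)" by (rule LeastI)
  then obtain j0 p0 where j0: "j0 = (LEAST j. S j)" "0 < j0"
    and \<omega>: "of_int p0 + of_int (int j0) * (w2 / w1) \<in> R" unfolding S_def by blast
  have "of_int p + of_int (int j) * (w2 / w1) \<notin> R" if "0 < j" "j < j0" for j p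
    using not_less_Least[of j S] that unfolding j0(1) S_def by blast
  from End_ring_eq_lattice_gen_if_least[OF j0(2) refl \<omega> this]
  show ?thesis using that \<omega> j0(2) nondeg by (simp del: times_divide_eq_right)
qed

text \<open>\<open>cyclic_mod c y\<close>: the class of \<open>y\<close> generates \<open>L / c L\<close>.\<close>

definition cyclic_mod :: "complex \<Rightarrow> complex \<Rightarrow> bool" where
  "cyclic_mod c y \<longleftrightarrow> y \<in> L \<and> L \<subseteq> {of_int k * y + c * l | k l. l \<in> L}"

text \<open>\<open>L / g r L\<close> maps onto \<open>L / g L \<cong> (\<int>/g)^2\<close>, which is not cyclic: writing the basis in terms
  of \<open>y\<close> modulo \<open>g\<close> gives a rank-one matrix congruent to the identity modulo \<open>g\<close>.\<close>

lemma not_cyclic_mod_int_mult: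
  fixes g :: int
  assumes g: "g \<ge> 2" and r: "r \<in> R"
  shows "\<not> cyclic_mod (of_int g * r) y"
proof
  assume "cyclic_mod (of_int g * r) y"
  hence y: "y \<in> L" and sub: "L \<subseteq> {of_int k * y + (of_int g * r) * l | k l. l \<in> L}"
    unfolding cyclic_mod_def by auto
  have gL: "\<exists>u v :: int. (of_int g * r) * l = of_int (g*u) * w1 + of_int (g*v) * w2" if l: "l \<in> L" for l
  proof -
    obtain u v :: int where "r * l = of_int u * w1 + of_int v * w2"
      using End_ringD[OF r l] unfolding mem_L_iff by blast
    hence "(of_int g * r) * l = of_int g * (of_int u * w1 + of_int v * w2)" by (simp add: mult_ac)
    hence "(of_int g * r) * l = of_int (g*u) * w1 + of_int (g*v) * w2" by (simp add: algebra_simps)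
    thus ?thesis by blast
  qed
  obtain a b :: int where y: "y = of_int a * w1 + of_int b * w2" using y unfolding mem_L_iff by blast
  obtain k1 l1 where k1: "w1 = of_int k1 * y + (of_int g * r) * l1" "l1 \<in> L" using sub w1_in_L by blast
  obtain k2 l2 where k2: "w2 = of_int k2 * y + (of_int g * r) * l2" "l2 \<in> L" using sub w2_in_L by blast
  obtain u1 v1 where uv1: "(of_int g * r) * l1 = of_int (g*u1) * w1 + of_int (g*v1) * w2" using gL[OF k1(2)] by blast
  obtain u2 v2 where uv2: "(of_int g * r) * l2 = of_int (g*u2) * w1 + of_int (g*v2) * w2" using gL[OF k2(2)] by blast
  have "of_int 1 * w1 + of_int 0 * w2 = of_int (k1*a + g*u1) * w1 + of_int (k1*b + g*v1) * w2"
    using k1(1) uv1 y by (simp add: algebra_simps)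
  from basis_coords_eq[OF this] have e1: "k1*a = 1 - g*u1" "k1*b = - g*v1" by auto
  have "of_int 0 * w1 + of_int 1 * w2 = of_int (k2*a + g*u2) * w1 + of_int (k2*b + g*v2) * w2"
    using k2(1) uv2 y by (simp add: algebra_simps)
  from basis_coords_eq[OF this] have e2: "k2*a = - g*u2" "k2*b = 1 - g*v2" by auto
  have "(k1*a) * (k2*b) = (k1*b) * (k2*a)" by (simp add: algebra_simps)
  hence "(1 - g*u1) * (1 - g*v2) = (- g*v1) * (- g*u2)" unfolding e1 e2 .
  hence "1 = g * (u1 + v2 - g*u1*v2 + g*v1*u2)" by (simp add: algebra_simps)
  hence "g dvd 1" by (metis dvd_triv_left)
  thus False using g by (simp add: zdvd1_eq)
qed

lemma cyclic_mod_not_divisible: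
  assumes "cyclic_mod c y" and "g \<ge> 2"
  shows "c / of_int g \<notin> R"
proof
  assume "c / of_int g \<in> R"
  from not_cyclic_mod_int_mult[OF assms(2) this] show False
    using assms by simp
qed

lemma cyclic_mod_real:
  assumes c: "c \<in> R" "Im c = 0" "c \<noteq> 0" and "cyclic_mod c y"
  shows "c = 1 \<or> c = -1"
proof -
  obtain k where k: "c = of_int k" using End_ring_real_imp_int[OF c(1,2)] by blast
  have "\<not> \<bar>k\<bar> \<ge> 2"
  proof
    assume "\<bar>k\<bar> \<ge> 2"
    moreover have "c / of_int \<bar>k\<bar> = of_int (sgn k)" unfolding k by (simp add: sgn_if)
    ultimately show False using cyclic_mod_not_divisible[OF assms(4)] End_ring_of_int by metis
  qed
  moreover have "k \<noteq> 0" using c(3) k by simp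
  ultimately have "k = 1 \<or> k = -1" by auto
  thus ?thesis using k by auto
qed

text \<open>With \<open>g = n / gcd(m, n)\<close> for the norm \<open>n\<close> of \<open>c\<close>, Bezout writes \<open>cnj c / g\<close> as an integral
  combination of the endomorphisms \<open>m / c = m cnj c / n\<close> and \<open>cnj c\<close>; primitivity forces \<open>g = 1\<close>.\<close>

lemma cyclic_mod_norm_le:
  assumes c: "c \<in> R" "c \<noteq> 0" and "cyclic_mod c y" and m: "m > 0" "of_nat m / c \<in> R"
    and norm: "c * cnj c = of_int nc"
  shows "nc \<le> int m"
proof -
  have "complex_of_real ((Re c)^2 + (Im c)^2) = of_int nc" using norm complex_mult_cnj by metis
  hence "real_of_int nc = (Re c)^2 + (Im c)^2" by (metis of_real_eq_iff of_real_of_int_eq)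
  moreover have "(Re c)^2 + (Im c)^2 > 0" using c(2) by (simp add: complex_eq_iff sum_power2_gt_zero_iff)
  ultimately have nc_pos: "nc > 0" by simp
  define d where "d = gcd (int m) nc"
  obtain u v where uv: "u * int m + v * nc = d" using bezout_int unfolding d_def by blast
  have d_pos: "d > 0" unfolding d_def using nc_pos by simp
  obtain g where g: "nc = d * g" unfolding d_def by (meson gcd_dvd2 dvdE)
  have g_pos: "g > 0" using g nc_pos d_pos by (simp add: zero_less_mult_iff)
  have "1 / c = cnj c / of_int nc" using norm c(2) nc_pos by (simp add: field_simps)
  hence m_div_c: "of_nat m / c = of_nat m * (cnj c / of_int nc)" by (metis times_divide_eq_right mult_1_right)
  have "of_int u * (of_nat m / c) + of_int v * cnj c = (of_int (u * int m + v * nc) / of_int nc) * cnj c"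
    unfolding m_div_c using nc_pos by (simp add: field_simps)
  also have "\<dots> = cnj c / of_int g" unfolding uv using g d_pos g_pos by (simp add: field_simps)
  finally have "cnj c / of_int g \<in> R"
    using End_ring_add[OF End_ring_int_mult[OF m(2)] End_ring_int_mult[OF End_ring_cnj[OF c(1)]]] by metis
  from End_ring_cnj[OF this] have "c / of_int g \<in> R" by simp
  hence "\<not> g \<ge> 2" using cyclic_mod_not_divisible[OF assms(3)] by blast
  hence "g = 1" using g_pos by simp
  hence "nc = d" using g by simp
  hence "nc dvd int m" unfolding d_def using gcd_dvd1[of "int m" nc] by simp
  thus ?thesis using m(1) by (simp add: zdvd_imp_le)
qed

end

section \<open>Torsion endomorphisms and their matrices\<close>

lemma not_QuadRes_imp_not_dvd: "\<not> QuadRes (int N) eps \<Longrightarrow> \<not> int N dvd (y^2 - eps)"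
  unfolding QuadRes_def cong_iff_dvd_diff by blast

lemma QuadRes_2: "QuadRes 2 eps"
  unfolding QuadRes_def cong_iff_dvd_diff by (rule exI[of _ eps]) (simp add: power2_eq_square)

text \<open>As \<open>eps\<close> is a non-residue, \<open>A\<close> has no eigenvector modulo \<open>N\<close>; in particular \<open>a21\<close> is invertible,
  which determines \<open>b\<close> and then \<open>a\<close>.\<close>

lemma commutant_of_nonsplit_matrix:
  fixes N :: nat and a11 a12 a21 a22 p q r s eps :: int
  assumes N: "prime N" and eps: "\<not> QuadRes (int N) eps"
    and square: "int N dvd a11^2 + a12*a21 - eps"
    and comm1: "int N dvd r*a21 - a12*q"
    and comm2: "int N dvd q*a11 + s*a21 - a21*p - a22*q"
  obtains a b where "int N dvd p - a - b*a11" "int N dvd q - b*a21" "int N dvd r - b*a12" "int N dvd s - a - b*a22"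
proof -
  have pN: "prime (int N)" using N by simp
  have a21: "\<not> int N dvd a21"
  proof
    assume "int N dvd a21"
    hence "int N dvd a12 * a21" by simp
    from dvd_diff[OF square this] have "int N dvd (a11^2 + a12*a21 - eps) - a12*a21" .
    hence "int N dvd a11^2 - eps" by simp
    thus False using not_QuadRes_imp_not_dvd[OF eps] by blast
  qed
  hence "coprime a21 (int N)" using prime_imp_coprime[OF pN] by (simp add: coprime_commute)
  then obtain x where "[a21 * x = 1] (mod int N)" using cong_solve_coprime_int by blast
  hence inv: "int N dvd a21 * x - 1" by (simp add: cong_iff_dvd_diff)
  define b where "b = x * q"
  define a where "a = p - b * a11"
  have "q - b*a21 = - q * (a21 * x - 1)" unfolding b_def by (simp add: algebra_simps)
  hence d2: "int N dvd q - b*a21" using inv by simp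
  have "a21 * (r - b*a12) = (r*a21 - a12*q) + a12 * (q - b*a21)" by (simp add: algebra_simps)
  hence "int N dvd a21 * (r - b*a12)" using comm1 d2 by simp
  hence d3: "int N dvd r - b*a12" using a21 prime_dvd_mult_iff[OF pN] by blast
  have "a21 * (s - a - b*a22) = (q*a11 + s*a21 - a21*p - a22*q) - (a11 - a22) * (q - b*a21)"
    unfolding a_def by (simp add: algebra_simps)
  hence "int N dvd a21 * (s - a - b*a22)" using comm2 d2 by simp
  hence d4: "int N dvd s - a - b*a22" using a21 prime_dvd_mult_iff[OF pN] by blast
  show ?thesis by (rule that[of a b]) (use d2 d3 d4 in \<open>simp_all add: a_def\<close>)
qed

context lattice_basis
begin

lemma tors_endo_int_mult:
  assumes f: "is_tors_endo N L f" and x: "x \<in> torsion N L"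
  shows "f (of_int k * x) - of_int k * f x \<in> L"
proof -
  have add: "f (u + v) - f u - f v \<in> L" if "u \<in> torsion N L" "v \<in> torsion N L" for u v
    using f that unfolding is_tors_endo_def by blast
  have zero: "0 \<in> torsion N L" unfolding torsion_def using L_zero by simp
  have "- f 0 \<in> L" using add[OF zero zero] by simp
  hence f0: "f 0 \<in> L" using L_uminus by fastforce
  have nat: "f (of_nat j * x) - of_nat j * f x \<in> L" for j
  proof (induction j)
    case 0 thus ?case using f0 by simp
  next
    case (Suc j)
    have jx: "of_nat j * x \<in> torsion N L" using torsion_int_mult[OF x, of "int j"] by simp
    have "f (of_nat (Suc j) * x) - of_nat (Suc j) * f x
        = (f (of_nat j * x + x) - f (of_nat j * x) - f x) + (f (of_nat j * x) - of_nat j * f x)"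
      by (simp add: algebra_simps)
    thus ?case using L_add[OF add[OF jx x] Suc] by simp
  qed
  show ?thesis
  proof (cases "k \<ge> 0")
    case True
    then obtain j where "k = int j" by (metis nonneg_eq_int)
    thus ?thesis using nat[of j] by simp
  next
    case False
    then obtain j where k: "k = - int j" by (metis nonneg_eq_int neg_0_le_iff_le le_cases minus_minus)
    have jx: "of_nat j * x \<in> torsion N L" using torsion_int_mult[OF x, of "int j"] by simp
    have mjx: "- (of_nat j * x) \<in> torsion N L" using torsion_int_mult[OF x, of "- int j"] by simp
    have neg: "f 0 - f (- (of_nat j * x)) - f (of_nat j * x) \<in> L" using add[OF mjx jx] by simp
    have "f (of_int k * x) - of_int k * f x
        = - ((f 0 - f (- (of_nat j * x)) - f (of_nat j * x)) + (f (of_nat j * x) - of_nat j * f x)) + f 0"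
      unfolding k by (simp add: algebra_simps)
    thus ?thesis using L_add[OF L_uminus[OF L_add[OF neg nat[of j]]] f0] by (simp only:)
  qed
qed

lemma tors_endo_linear:
  assumes f: "is_tors_endo N L f" and "N > 0"
  shows "f (tors_pt N x1 x2) - (of_int x1 * f (tors_pt N 1 0) + of_int x2 * f (tors_pt N 0 1)) \<in> L"
proof -
  have add: "f (u + v) - f u - f v \<in> L" if "u \<in> torsion N L" "v \<in> torsion N L" for u v
    using f that unfolding is_tors_endo_def by blast
  have t1: "tors_pt N 1 0 \<in> torsion N L" and t2: "tors_pt N 0 1 \<in> torsion N L"
    using torsion_iff_tors_pt[OF \<open>N > 0\<close>] by blast+
  note u1 = torsion_int_mult[OF t1, of x1] and u2 = torsion_int_mult[OF t2, of x2]
  have "f (tors_pt N x1 x2) - (of_int x1 * f (tors_pt N 1 0) + of_int x2 * f (tors_pt N 0 1))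
     = (f (of_int x1 * tors_pt N 1 0 + of_int x2 * tors_pt N 0 1) - f (of_int x1 * tors_pt N 1 0)
          - f (of_int x2 * tors_pt N 0 1))
       + (f (of_int x1 * tors_pt N 1 0) - of_int x1 * f (tors_pt N 1 0))
       + (f (of_int x2 * tors_pt N 0 1) - of_int x2 * f (tors_pt N 0 1))"
    by (subst tors_pt_linear) (simp add: algebra_simps)
  thus ?thesis
    using L_add[OF L_add[OF add[OF u1 u2] tors_endo_int_mult[OF f t1]] tors_endo_int_mult[OF f t2]] by (simp only:)
qed

end

context lattice_basis
begin

lemma tors_endo_square_congruence:
  assumes N: "N > 0" and f: "is_tors_endo N L f"
    and square: "\<forall>x\<in>torsion N L. f (f x) - of_int eps * x \<in> L"
    and f10: "f (tors_pt N 1 0) = tors_pt N a11 a21" and f01: "f (tors_pt N 0 1) = tors_pt N a12 a22"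
  shows "int N dvd a11^2 + a12*a21 - eps"
proof -
  have t10: "tors_pt N 1 0 \<in> torsion N L" using torsion_iff_tors_pt[OF N] by blast
  have eq: "f (f (tors_pt N 1 0)) - of_int eps * tors_pt N 1 0
      - (f (tors_pt N a11 a21) - (of_int a11 * f (tors_pt N 1 0) + of_int a21 * f (tors_pt N 0 1)))
      = tors_pt N (a11*a11 + a21*a12 - eps) (a11*a21 + a21*a22)"
    unfolding f10 f01 unfolding tors_pt_def by (simp add: divide_inverse algebra_simps)
  have "f (f (tors_pt N 1 0)) - of_int eps * tors_pt N 1 0
      - (f (tors_pt N a11 a21) - (of_int a11 * f (tors_pt N 1 0) + of_int a21 * f (tors_pt N 0 1))) \<in> L"
    using L_diff[OF bspec[OF square t10] tors_endo_linear[OF f N]] unfolding f10 .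
  hence "tors_pt N (a11*a11 + a21*a12 - eps) (a11*a21 + a21*a22) \<in> L" unfolding eq .
  thus ?thesis using tors_pt_in_L_iff[OF N] by (simp add: power2_eq_square algebra_simps)
qed

lemma tors_endo_commute_congruence:
  assumes N: "N > 0" and f: "is_tors_endo N L f"
    and comm: "\<forall>x\<in>torsion N L. c * f x - f (c * x) \<in> L"
    and cw1: "c * w1 = of_int p * w1 + of_int q * w2" and cw2: "c * w2 = of_int r * w1 + of_int s * w2"
    and f10: "f (tors_pt N 1 0) = tors_pt N a11 a21" and f01: "f (tors_pt N 0 1) = tors_pt N a12 a22"
  shows "int N dvd r*a21 - a12*q" and "int N dvd q*a11 + s*a21 - a21*p - a22*q"
proof -
  have t10: "tors_pt N 1 0 \<in> torsion N L" using torsion_iff_tors_pt[OF N] by blast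
  have c10: "c * tors_pt N 1 0 = tors_pt N p q" using mult_tors_pt[OF cw1 cw2, of N 1 0] by simp
  have "(c * f (tors_pt N 1 0) - f (c * tors_pt N 1 0))
      + (f (tors_pt N p q) - (of_int p * f (tors_pt N 1 0) + of_int q * f (tors_pt N 0 1)))
      = tors_pt N (a11*p + a21*r - p*a11 - q*a12) (a11*q + a21*s - p*a21 - q*a22)"
    unfolding c10 f10 f01 mult_tors_pt[OF cw1 cw2] unfolding tors_pt_def
    by (simp add: divide_inverse algebra_simps)
  moreover have "(c * f (tors_pt N 1 0) - f (c * tors_pt N 1 0))
      + (f (tors_pt N p q) - (of_int p * f (tors_pt N 1 0) + of_int q * f (tors_pt N 0 1))) \<in> L"
    using L_add[OF bspec[OF comm t10] tors_endo_linear[OF f N]] .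
  ultimately have "int N dvd (a11*p + a21*r - p*a11 - q*a12) \<and> int N dvd (a11*q + a21*s - p*a21 - q*a22)"
    using tors_pt_in_L_iff[OF N] by simp
  thus "int N dvd r*a21 - a12*q" and "int N dvd q*a11 + s*a21 - a21*p - a22*q"
    by (simp_all add: algebra_simps)
qed

lemma commuting_End_ring_on_torsion:
  fixes N :: nat
  assumes N: "prime N" and eps: "\<not> QuadRes (int N) eps"
    and f: "is_tors_endo N L f" and square: "\<forall>x\<in>torsion N L. f (f x) - of_int eps * x \<in> L"
    and c: "c \<in> R" and comm: "\<forall>x\<in>torsion N L. c * f x - f (c * x) \<in> L"
  obtains a b :: int where "\<forall>x\<in>torsion N L. c * x - (of_int a * x + of_int b * f x) \<in> L"
proof -
  have N_pos: "N > 0" using N prime_gt_0_nat by blast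
  have t10: "tors_pt N 1 0 \<in> torsion N L" and t01: "tors_pt N 0 1 \<in> torsion N L"
    using torsion_iff_tors_pt[OF N_pos] by blast+
  have f_tors: "f x \<in> torsion N L" if "x \<in> torsion N L" for x using f that unfolding is_tors_endo_def by blast
  obtain a11 a21 where f10: "f (tors_pt N 1 0) = tors_pt N a11 a21"
    using f_tors[OF t10] torsion_iff_tors_pt[OF N_pos] by blast
  obtain a12 a22 where f01: "f (tors_pt N 0 1) = tors_pt N a12 a22"
    using f_tors[OF t01] torsion_iff_tors_pt[OF N_pos] by blast
  obtain p q r s :: int where cw1: "c * w1 = of_int p * w1 + of_int q * w2"
    and cw2: "c * w2 = of_int r * w1 + of_int s * w2" using End_ring_coords[OF c] by blast
  obtain a b where ab: "int N dvd p - a - b*a11" "int N dvd q - b*a21" "int N dvd r - b*a12" "int N dvd s - a - b*a22"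
    using commutant_of_nonsplit_matrix[OF N eps tors_endo_square_congruence[OF N_pos f square f10 f01]
        tors_endo_commute_congruence[OF N_pos f comm cw1 cw2 f10 f01]] .
  have "c * x - (of_int a * x + of_int b * f x) \<in> L" if x_tors: "x \<in> torsion N L" for x
  proof -
    obtain x1 x2 where x: "x = tors_pt N x1 x2" using x_tors torsion_iff_tors_pt[OF N_pos] by blast
    define y where "y = of_int x1 * f (tors_pt N 1 0) + of_int x2 * f (tors_pt N 0 1)"
    have "c * x - (of_int a * x + of_int b * y)
        = tors_pt N (x1 * (p - a - b*a11) + x2 * (r - b*a12)) (x1 * (q - b*a21) + x2 * (s - a - b*a22))"
      unfolding x y_def mult_tors_pt[OF cw1 cw2] f10 f01 unfolding tors_pt_def
      by (simp add: divide_inverse algebra_simps)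
    also have "\<dots> \<in> L" using tors_pt_in_L_iff[OF N_pos] ab by simp
    finally have "c * x - (of_int a * x + of_int b * y) \<in> L" .
    moreover have "of_int b * (y - f x) \<in> L"
      using L_int_mult[OF L_uminus[OF tors_endo_linear[OF f N_pos]]] unfolding x y_def by (simp add: algebra_simps)
    ultimately have "(c * x - (of_int a * x + of_int b * y)) + of_int b * (y - f x) \<in> L" by (rule L_add)
    thus ?thesis by (simp add: algebra_simps)
  qed
  thus ?thesis using that by blast
qed

end

section \<open>A criterion for Heegner points\<close>

text \<open>If \<open>(i + j \<omega>)^2 \<equiv> eps (mod N)\<close> for \<open>\<omega>^2 = T \<omega> - n\<close> and a non-residue \<open>eps\<close>, then \<open>N \<nmid> j\<close>, so
  \<open>2 i + j T \<equiv> 0\<close>, and \<open>4 eps \<equiv> (2 i)^2 - j^2 (T^2 - 4 n)\<close> shows \<open>N \<nmid> T^2 - 4 n\<close>.\<close>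

lemma nonresidue_square_root_disc:
  fixes N :: nat and i j T n eps u v :: int
  assumes N: "prime N" and eps: "\<not> QuadRes (int N) eps"
    and const: "i^2 - j^2*n - eps = int N * u" and linear: "2*i*j + j^2*T = int N * v"
  shows "\<not> int N dvd T^2 - 4*n"
proof
  assume disc: "int N dvd T^2 - 4*n"
  have pN: "prime (int N)" using N by simp
  have N_not_dvd_2: "\<not> int N dvd 2"
  proof
    assume "int N dvd 2"
    hence "N \<le> 2" using int_dvd_int_iff[of N 2] by (simp add: dvd_imp_le)
    moreover have "N \<noteq> 2" using eps QuadRes_2 by auto
    ultimately show False using N prime_ge_2_nat[of N] by simp
  qed
  have j: "\<not> int N dvd j"
  proof
    assume "int N dvd j"
    hence "int N dvd (i^2 - j^2*n - eps) + j^2 * n" using const by (simp add: power2_eq_square)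
    hence "int N dvd i^2 - eps" by simp
    thus False using not_QuadRes_imp_not_dvd[OF eps] by blast
  qed
  have "int N dvd j * (2*i + j*T)" using linear by (simp add: algebra_simps power2_eq_square)
  hence trace: "int N dvd 2*i + j*T" using j prime_dvd_mult_iff[OF pN] by blast
  have "4 * (i^2 - j^2*n) = (2*i + j*T) * (2*i - j*T) + j^2 * (T^2 - 4*n)"
    by (simp add: algebra_simps power2_eq_square)
  hence "int N dvd 4 * (i^2 - j^2*n)" using trace disc by simp
  hence "int N dvd 4 * (int N * u) + 4 * eps" using const by (simp add: algebra_simps)
  hence "int N dvd 2 * (2 * eps)" by (simp add: dvd_add_right_iff)
  hence "int N dvd eps" using N_not_dvd_2 prime_dvd_mult_iff[OF pN] by blast
  hence "int N dvd 0^2 - eps" by simp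
  thus False using not_QuadRes_imp_not_dvd[OF eps] by blast
qed

context quadratic_order
begin

lemma disc_not_dvd_if_square_congruent:
  fixes N :: nat
  assumes N: "prime N" and eps: "\<not> QuadRes (int N) eps"
    and \<alpha>: "\<alpha> \<in> Z\<omega>" and square: "(\<alpha>^2 - of_int eps) / of_nat N \<in> Z\<omega>"
  shows "\<not> int N dvd T^2 - 4*n"
proof -
  have N_pos: "N > 0" using N prime_gt_0_nat by blast
  obtain u v :: int where uv: "(\<alpha>^2 - of_int eps) / of_nat N = of_int u + of_int v * \<omega>"
    using square unfolding mem_Z\<omega>_iff by blast
  obtain i j :: int where \<alpha>_eq: "\<alpha> = of_int i + of_int j * \<omega>" using \<alpha> unfolding mem_Z\<omega>_iff by blast
  have "\<alpha>^2 = of_int i ^ 2 + 2 * of_int i * of_int j * \<omega> + of_int j ^ 2 * \<omega>^2"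
    unfolding \<alpha>_eq by (simp add: power2_eq_square algebra_simps)
  also have "\<dots> = of_int (i^2 - j^2*n) + of_int (2*i*j + j^2*T) * \<omega>"
    unfolding omega_quad by (simp add: algebra_simps)
  finally have "of_int (i^2 - j^2*n - eps - int N * u) + of_int (2*i*j + j^2*T - int N * v) * \<omega> = 0"
    using uv N_pos by (simp add: field_simps)
  from nonreal_indep_int[OF Im_omega this] show ?thesis
    by (intro nonresidue_square_root_disc[OF N eps, of i j n u T v]) simp_all
qed

end

context lattice_basis
begin

lemma End_ring_lift_square:
  assumes "N > 0" and f: "is_tors_endo N L f" and square: "\<forall>x\<in>torsion N L. f (f x) - of_int eps * x \<in> L"
    and \<alpha>: "\<alpha> \<in> R" and lift: "\<forall>x\<in>torsion N L. f x - \<alpha> * x \<in> L"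
  shows "(\<alpha>^2 - of_int eps) / of_nat N \<in> R"
proof (rule End_ring_div_N[OF \<open>N > 0\<close>])
  fix x assume x: "x \<in> torsion N L"
  have \<alpha>x: "\<alpha> * x \<in> torsion N L" by (rule torsion_End_ring[OF \<alpha> x])
  have fx: "f x \<in> torsion N L" using f x unfolding is_tors_endo_def by blast
  have A: "\<alpha> * (\<alpha> * x) - f (\<alpha> * x) \<in> L" using L_uminus[OF bspec[OF lift \<alpha>x]] by simp
  have "\<alpha> * x - f x \<in> L" using L_uminus[OF bspec[OF lift x]] by simp
  hence B: "f (\<alpha> * x) - f (f x) \<in> L" using f \<alpha>x fx unfolding is_tors_endo_def by blast
  have C: "f (f x) - of_int eps * x \<in> L" using square x by blast
  have "(\<alpha>^2 - of_int eps) * x = (\<alpha> * (\<alpha> * x) - f (\<alpha> * x)) + (f (\<alpha> * x) - f (f x)) + (f (f x) - of_int eps * x)"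
    by (simp add: algebra_simps power2_eq_square)
  thus "(\<alpha>^2 - of_int eps) * x \<in> L" using L_add[OF L_add[OF A B] C] by simp
qed

text \<open>A lift \<open>\<alpha>\<close> of \<open>\<phi>\<close> cannot be an integer, since \<open>eps\<close> is not a square modulo \<open>N\<close>; so \<open>End(E)\<close> is an
  imaginary quadratic order, and its discriminant is prime to \<open>N\<close>.\<close>

lemma heegner_if_End_ring_lift:
  fixes N :: nat
  assumes N: "prime N" and eps: "\<not> QuadRes (int N) eps"
    and f: "is_tors_endo N L f" and square: "\<forall>x\<in>torsion N L. f (f x) - of_int eps * x \<in> L"
    and \<alpha>: "\<alpha> \<in> R" and lift: "\<forall>x\<in>torsion N L. f x - \<alpha> * x \<in> L"
  shows "heegner N L f"
proof -
  have N_pos: "N > 0" using N prime_gt_0_nat by blast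
  have \<alpha>_square: "(\<alpha>^2 - of_int eps) / of_nat N \<in> R"
    by (rule End_ring_lift_square[OF N_pos f square \<alpha> lift])
  have "Im \<alpha> \<noteq> 0"
  proof
    assume "Im \<alpha> = 0"
    then obtain k where k: "\<alpha> = of_int k" using End_ring_real_imp_int[OF \<alpha>] by blast
    hence "Im ((\<alpha>^2 - of_int eps) / of_nat N) = 0" by simp
    then obtain u where "(\<alpha>^2 - of_int eps) / of_nat N = of_int u"
      using End_ring_real_imp_int[OF \<alpha>_square] by blast
    hence "of_int (k^2 - eps) = (of_int (int N * u) :: complex)" using k N_pos by (simp add: field_simps)
    hence "int N dvd k^2 - eps" by (simp only: of_int_eq_iff) simp
    thus False using not_QuadRes_imp_not_dvd[OF eps] by blast
  qed
  then obtain \<omega> where \<omega>: "\<omega> \<in> R" "Im \<omega> \<noteq> 0" and R_eq: "R = lattice_gen 1 \<omega>"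
    using End_ring_eq_lattice_gen[OF \<alpha>] by blast
  obtain T n where "\<omega>^2 = of_int T * \<omega> - of_int n" using End_ring_charpoly[OF \<omega>(1)] by blast
  then interpret quadratic_order \<omega> T n using \<omega>(2) by unfold_locales
  have "N \<noteq> 2" using eps QuadRes_2 by auto
  moreover have "\<not> int N dvd T^2 - 4*n"
    using disc_not_dvd_if_square_congruent[OF N eps] \<alpha> \<alpha>_square unfolding R_eq by blast
  ultimately have "coprime (conductor Z\<omega> K) N" using conductor_coprime[OF N] by blast
  thus ?thesis unfolding heegner_def R_eq using imag_quad_omega is_order_Z\<omega> \<alpha> lift R_eq by blast
qed

end

context lattice_basis
begin

lemma Im_power2_ge_if_congruent_int:
  assumes "N > 0" and c: "c \<in> R" "Im c \<noteq> 0" and div: "(c - of_int a) / of_nat N \<in> R"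
  shows "(Im c)^2 \<ge> (real N)^2 / 4"
proof -
  define \<beta> where "\<beta> = (c - of_int a) / of_nat N"
  have Im_\<beta>: "Im \<beta> = Im c / real N" unfolding \<beta>_def by simp
  hence "Im \<beta> \<noteq> 0" using c(2) \<open>N > 0\<close> by simp
  moreover obtain T n where "\<beta>^2 = of_int T * \<beta> - of_int n" using End_ring_charpoly div \<beta>_def by metis
  ultimately have "(Im \<beta>)^2 \<ge> 1/4" by (rule nonreal_quadratic_Im_power2_ge)
  hence "(real N)^2 * (1/4) \<le> (real N)^2 * (Im \<beta>)^2" by (intro mult_left_mono) simp_all
  also have "\<dots> = (Im c)^2" unfolding Im_\<beta> using \<open>N > 0\<close> by (simp add: power_divide)
  finally show ?thesis by simp
qed

text \<open>Otherwise \<open>norm c \<ge> (Im c)^2 \<ge> N^2/4 > m \<ge> norm c\<close>.\<close>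

lemma cyclic_mod_not_congruent_int:
  fixes N m :: nat
  assumes "N > 0" and m: "m > 0" "real m < (real N)^2 / 4"
    and c: "c \<in> R" "Im c \<noteq> 0" and m_div_c: "of_nat m / c \<in> R" and cyclic: "cyclic_mod c y"
  shows "(c - of_int a) / of_nat N \<notin> R"
proof
  assume "(c - of_int a) / of_nat N \<in> R"
  hence "(Im c)^2 \<ge> (real N)^2 / 4" by (rule Im_power2_ge_if_congruent_int[OF \<open>N > 0\<close> c])
  moreover obtain T n where "c^2 = of_int T * c - of_int n" using End_ring_charpoly[OF c(1)] by blast
  note norm = nonreal_quadratic_vieta(2)[OF c(2) this]
  have "real_of_int n = (Re c)^2 + (Im c)^2"
    using norm complex_mult_cnj[of c] by (metis of_real_eq_iff of_real_of_int_eq)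
  moreover have "n \<le> int m" by (rule cyclic_mod_norm_le[OF c(1) _ cyclic m(1) m_div_c norm]) (use c(2) in auto)
  ultimately show False using m(2) by (smt (verit) of_int_le_iff of_int_of_nat_eq zero_le_power2)
qed

lemma End_ring_lift_if_affine_on_torsion:
  fixes N :: nat
  assumes N: "prime N" and f: "is_tors_endo N L f" and c: "c \<in> R"
    and affine: "\<forall>x\<in>torsion N L. c * x - (of_int a * x + of_int b * f x) \<in> L" and b: "\<not> int N dvd b"
  obtains \<alpha> where "\<alpha> \<in> R" and "\<forall>x\<in>torsion N L. f x - \<alpha> * x \<in> L"
proof -
  have "coprime b (int N)" using prime_imp_coprime[of "int N" b] N b by (simp add: coprime_commute)
  then obtain b' where "[b * b' = 1] (mod int N)" using cong_solve_coprime_int by blast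
  hence "int N dvd b' * b - 1" by (simp add: cong_iff_dvd_diff mult.commute)
  then obtain k where k: "b' * b - 1 = int N * k" by blast
  define \<alpha> where "\<alpha> = of_int b' * (c - of_int a)"
  have \<alpha>: "\<alpha> \<in> R" unfolding \<alpha>_def by (intro End_ring_int_mult End_ring_diff[OF c End_ring_of_int])
  have "f x - \<alpha> * x \<in> L" if x: "x \<in> torsion N L" for x
  proof -
    have "of_int k * (of_nat N * f x) \<in> L"
      using f x L_int_mult unfolding is_tors_endo_def torsion_def by blast
    moreover have "of_int b' * (c * x - (of_int a * x + of_int b * f x)) \<in> L" using L_int_mult affine x by blast
    ultimately have "- (of_int k * (of_nat N * f x) + of_int b' * (c * x - (of_int a * x + of_int b * f x))) \<in> L"
      by (intro L_uminus L_add)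
    moreover have "of_int k * (of_nat N * f x) = (of_int b' * of_int b - 1) * f x"
      using arg_cong[OF k, of "of_int :: int \<Rightarrow> complex"] by simp
    hence "f x - \<alpha> * x = - (of_int k * (of_nat N * f x) + of_int b' * (c * x - (of_int a * x + of_int b * f x)))"
      unfolding \<alpha>_def by (simp add: algebra_simps)
    ultimately show ?thesis by simp
  qed
  with \<alpha> that show ?thesis by blast
qed

text \<open>On \<open>E[N]\<close> the endomorphism \<open>c\<close> equals \<open>a + b \<phi>\<close>. The norm bound excludes \<open>N \<mid> b\<close>, and otherwise
  \<open>b^-1 (c - a)\<close> lifts \<open>\<phi>\<close>.\<close>

lemma heegner_if_cyclic_endomorphism:
  fixes N m :: nat
  assumes N: "prime N" and eps: "\<not> QuadRes (int N) eps" and m: "m > 0" "real m < (real N)^2 / 4"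
    and f: "is_tors_endo N L f" and square: "\<forall>x\<in>torsion N L. f (f x) - of_int eps * x \<in> L"
    and c: "c \<in> R" "Im c \<noteq> 0" and comm: "\<forall>x\<in>torsion N L. c * f x - f (c * x) \<in> L"
    and m_div_c: "of_nat m / c \<in> R" and cyclic: "cyclic_mod c y"
  shows "heegner N L f"
proof -
  have N_pos: "N > 0" using N prime_gt_0_nat by blast
  obtain a b :: int where affine: "\<forall>x\<in>torsion N L. c * x - (of_int a * x + of_int b * f x) \<in> L"
    using commuting_End_ring_on_torsion[OF N eps f square c(1) comm] .
  have "\<not> int N dvd b"
  proof
    assume "int N dvd b"
    then obtain k where b: "b = int N * k" by blast
    have "(c - of_int a) / of_nat N \<in> R"
    proof (rule End_ring_div_N[OF N_pos])
      fix x assume x: "x \<in> torsion N L"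
      have "of_int k * (of_nat N * f x) \<in> L" using f x L_int_mult unfolding is_tors_endo_def torsion_def by blast
      from L_add[OF bspec[OF affine x] this] show "(c - of_int a) * x \<in> L" unfolding b by (simp add: algebra_simps)
    qed
    thus False using cyclic_mod_not_congruent_int[OF N_pos m c m_div_c cyclic] by blast
  qed
  then obtain \<alpha> where "\<alpha> \<in> R" "\<forall>x\<in>torsion N L. f x - \<alpha> * x \<in> L"
    using End_ring_lift_if_affine_on_torsion[OF N f c(1) affine] by blast
  thus ?thesis using heegner_if_End_ring_lift[OF N eps f square] by blast
qed

end

section \<open>Fixed points of the Hecke correspondence\<close>

lemma hecke_corr_one:
  assumes "ns_structure N eps L f"
  shows "hecke_corr N eps 1 L f L f"
proof -
  obtain w1 w2 where "Im (w2 / w1) \<noteq> 0" and L: "L = lattice_gen w1 w2"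
    using assms unfolding ns_structure_def is_lattice_def by blast
  then interpret lattice_basis w1 w2 by unfold_locales
  have "ns_iso N L f L f" unfolding ns_iso_def by (rule exI[of _ 1]) (simp add: L L_zero)
  moreover have "cyclic_quotient 1 L L" unfolding cyclic_quotient_def
    by (rule exI[of _ 0]) (auto simp: L L_zero)
  moreover have "is_tors_endo N L f" using assms unfolding ns_structure_def by blast
  ultimately show ?thesis unfolding hecke_corr_def using assms L L_zero by fastforce
qed

text \<open>A point \<open>(E, \<phi>) = (\<complex>/L, f)\<close> on the diagonal of \<open>C_m\<close>: an isomorphic pair \<open>(\<complex>/L0, f0)\<close> (via \<open>c1\<close>),
  an \<open>m\<close>-isogeny \<open>\<complex>/L0 \<rightarrow> \<complex>/L'\<close> with kernel generated by \<open>z\<close>, and an isomorphism \<open>\<complex>/L' \<cong> \<complex>/L\<close> (via \<open>c2\<close>).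
  Composing them gives the endomorphism \<open>c = c2 / c1\<close> of \<open>E\<close>.\<close>

locale hecke_fixed_point = lattice_basis +
  fixes N m :: nat and f f0 f' :: "complex \<Rightarrow> complex" and L0 L' :: "complex set" and z c1 c2 :: complex
  assumes c1: "c1 \<noteq> 0" "(\<lambda>x. c1 * x) ` L0 = L"
    and iso1: "\<forall>x\<in>torsion N L0. c1 * f0 x - f (c1 * x) \<in> L"
    and c2: "c2 \<noteq> 0" "(\<lambda>x. c2 * x) ` L' = L"
    and iso2: "\<forall>x\<in>torsion N L'. c2 * f' x - f (c2 * x) \<in> L"
    and order_z: "of_nat m * z \<in> L0" "\<forall>k::nat. 0 < k \<and> k < m \<longrightarrow> of_nat k * z \<notin> L0"
    and L'_eq: "L' = {of_int k * z + l | k l. l \<in> L0}"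
    and isogeny: "\<forall>x\<in>torsion N L0. f' x - f0 x \<in> L'"
begin

definition "c = c2 / c1"

lemma c_mult: "c * (c1 * x) = c2 * x"
  unfolding c_def using c1 by simp

lemma mem_L0_iff: "x \<in> L0 \<longleftrightarrow> c1 * x \<in> L"
proof
  assume "c1 * x \<in> L"
  hence "c1 * x \<in> (\<lambda>x. c1 * x) ` L0" using c1(2) by simp
  then obtain x' where "x' \<in> L0" "c1 * x = c1 * x'" by blast
  thus "x \<in> L0" using c1(1) by simp
qed (use c1(2) in blast)

lemma L0_zero: "0 \<in> L0"
  unfolding mem_L0_iff using L_zero by simp

lemma L0_int_mult: "x \<in> L0 \<Longrightarrow> of_int k * x \<in> L0"
proof -
  assume "x \<in> L0"
  hence "of_int k * (c1 * x) \<in> L" unfolding mem_L0_iff by (rule L_int_mult)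
  thus "of_int k * x \<in> L0" unfolding mem_L0_iff by (simp add: mult.left_commute)
qed

lemma mem_L'_iff: "x \<in> L' \<longleftrightarrow> (\<exists>k l. x = of_int k * z + l \<and> l \<in> L0)"
  using L'_eq by blast

lemma L0_subset_L': "L0 \<subseteq> L'"
proof
  fix x assume "x \<in> L0"
  thus "x \<in> L'" unfolding mem_L'_iff by (intro exI[of _ 0] exI[of _ x]) simp
qed

lemma z_in_L': "z \<in> L'"
  unfolding mem_L'_iff using L0_zero by (intro exI[of _ 1] exI[of _ 0]) simp

lemma L'_uminus: "x \<in> L' \<Longrightarrow> - x \<in> L'"
proof -
  assume "x \<in> L'"
  then obtain k l where "x = of_int k * z + l" "l \<in> L0" unfolding mem_L'_iff by blast
  moreover have "- l \<in> L0" using L0_int_mult[OF \<open>l \<in> L0\<close>, of "-1"] by simp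
  ultimately have "- x = of_int (- k) * z + (- l)" "- l \<in> L0" by simp_all
  thus "- x \<in> L'" unfolding mem_L'_iff by blast
qed

lemma mult_c2_in_L: "x \<in> L' \<Longrightarrow> c2 * x \<in> L"
  using c2 by blast

lemma c_End_ring: "c \<in> R"
  unfolding End_ring_def
proof (rule CollectI, rule subsetI)
  fix u assume "u \<in> (\<lambda>x. c * x) ` L"
  then obtain x where x: "x \<in> L" "u = c * x" by blast
  then obtain y where y: "y \<in> L0" "x = c1 * y" using c1(2) by (metis imageE)
  have "u = c2 * y" unfolding x(2) y(2) c_mult ..
  thus "u \<in> L" using mult_c2_in_L L0_subset_L' y(1) by blast
qed

lemma c_nonzero: "c \<noteq> 0"
  unfolding c_def using c1 c2 by simp

lemma m_div_c_End_ring: "of_nat m / c \<in> R"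
  unfolding End_ring_def
proof (rule CollectI, rule subsetI)
  fix u assume "u \<in> (\<lambda>x. of_nat m / c * x) ` L"
  then obtain x where x: "x \<in> L" "u = of_nat m / c * x" by blast
  hence "x \<in> (\<lambda>x. c2 * x) ` L'" using c2(2) by simp
  then obtain y where "y \<in> L'" "x = c2 * y" by blast
  then obtain k l where y: "y = of_int k * z + l" "l \<in> L0" and xy: "x = c2 * y" unfolding mem_L'_iff by blast
  have "u = of_nat m / c * (c * (c1 * y))" unfolding x(2) xy c_mult ..
  hence u: "u = c1 * (of_nat m * y)" using c_nonzero by simp
  have "of_nat m * y = of_int k * (of_nat m * z) + of_int (int m) * l" unfolding y by (simp add: algebra_simps)
  moreover have "of_int k * (of_nat m * z) \<in> L0" "of_int (int m) * l \<in> L0"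
    using L0_int_mult order_z(1) y(2) by blast+
  ultimately have "c1 * (of_nat m * y) = c1 * (of_int k * (of_nat m * z)) + c1 * (of_int (int m) * l)"
    "c1 * (of_int k * (of_nat m * z)) \<in> L" "c1 * (of_int (int m) * l) \<in> L"
    unfolding mem_L0_iff by (simp_all add: distrib_left)
  thus "u \<in> L" unfolding u using L_add by simp
qed

lemma c_cyclic_mod: "cyclic_mod c (c2 * z)"
  unfolding cyclic_mod_def
proof
  show "c2 * z \<in> L" by (rule mult_c2_in_L[OF z_in_L'])
  show "L \<subseteq> {of_int k * (c2 * z) + c * l | k l. l \<in> L}"
  proof
    fix x assume "x \<in> L"
    hence "x \<in> (\<lambda>x. c2 * x) ` L'" using c2(2) by simp
    then obtain y where "y \<in> L'" "x = c2 * y" by blast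
    then obtain k l where "x = c2 * (of_int k * z + l)" "l \<in> L0" unfolding mem_L'_iff by blast
    hence "x = of_int k * (c2 * z) + c * (c1 * l)" "c1 * l \<in> L"
      unfolding c_mult mem_L0_iff by (simp_all add: algebra_simps)
    thus "x \<in> {of_int k * (c2 * z) + c * l | k l. l \<in> L}" by blast
  qed
qed

lemma c_commutes: "\<forall>x\<in>torsion N L. c * f x - f (c * x) \<in> L"
proof
  fix x assume x: "x \<in> torsion N L"
  define y where "y = x / c1"
  have x_eq: "x = c1 * y" unfolding y_def using c1 by simp
  have "c1 * (of_nat N * y) \<in> L" using x unfolding torsion_def x_eq by (simp add: mult.left_commute)
  hence "of_nat N * y \<in> L0" unfolding mem_L0_iff .
  hence y0: "y \<in> torsion N L0" and y': "y \<in> torsion N L'" unfolding torsion_def using L0_subset_L' by auto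
  have A: "c * (c1 * f0 y - f (c1 * y)) \<in> L" using End_ringD[OF c_End_ring] iso1 y0 by blast
  have B: "c2 * (- (f' y - f0 y)) \<in> L" using mult_c2_in_L L'_uminus isogeny y0 by blast
  have C: "c2 * f' y - f (c2 * y) \<in> L" using iso2 y' by blast
  have "c * f x - f (c * x) = - (c * (c1 * f0 y - f (c1 * y))) + c2 * (- (f' y - f0 y)) + (c2 * f' y - f (c2 * y))"
    unfolding x_eq c_mult right_diff_distrib by (simp add: algebra_simps)
  thus "c * f x - f (c * x) \<in> L" using L_add[OF L_add[OF L_uminus[OF A] B] C] by simp
qed

text \<open>If \<open>c = \<plusminus>1\<close>, then \<open>L = \<plusminus> c1 L0\<close> contains \<open>c2 z = \<plusminus> c1 z\<close>, so \<open>z \<in> L0\<close>: the isogeny is trivial.\<close>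

lemma m_le_1_if_c_unit: "c = 1 \<or> c = -1 \<Longrightarrow> m \<le> 1"
proof -
  assume "c = 1 \<or> c = -1"
  moreover have "c2 * z \<in> L" using c_cyclic_mod unfolding cyclic_mod_def by blast
  moreover have "c2 * z = c * (c1 * z)" by (rule c_mult[symmetric])
  ultimately have "c1 * z \<in> L" using L_uminus by force
  hence "of_nat 1 * z \<in> L0" unfolding mem_L0_iff by simp
  thus "m \<le> 1" using order_z(2) by fastforce
qed

end

lemma hecke_corr_fixed_point:
  assumes lattice: "lattice_basis w1 w2"
    and "hecke_corr N eps m (lattice_gen w1 w2) f (lattice_gen w1 w2) f"
  obtains f0 f' L0 L' z c1 c2 where "hecke_fixed_point w1 w2 N m f f0 f' L0 L' z c1 c2"
proof -
  from assms(2) obtain L0 f0 L' f' where iso1: "ns_iso N L0 f0 (lattice_gen w1 w2) f"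
    and quot: "cyclic_quotient m L0 L'" and isogeny: "\<forall>x\<in>torsion N L0. f' x - f0 x \<in> L'"
    and iso2: "ns_iso N L' f' (lattice_gen w1 w2) f"
    unfolding hecke_corr_def by blast
  from iso1 obtain c1 where "c1 \<noteq> 0" "(\<lambda>x. c1 * x) ` L0 = lattice_gen w1 w2"
    "\<forall>x\<in>torsion N L0. c1 * f0 x - f (c1 * x) \<in> lattice_gen w1 w2" unfolding ns_iso_def by blast
  moreover from iso2 obtain c2 where "c2 \<noteq> 0" "(\<lambda>x. c2 * x) ` L' = lattice_gen w1 w2"
    "\<forall>x\<in>torsion N L'. c2 * f' x - f (c2 * x) \<in> lattice_gen w1 w2" unfolding ns_iso_def by blast
  moreover from quot obtain z where "of_nat m * z \<in> L0" "\<forall>k::nat. 0 < k \<and> k < m \<longrightarrow> of_nat k * z \<notin> L0"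
    "L' = {of_int k * z + l | k l. l \<in> L0}" unfolding cyclic_quotient_def by blast
  ultimately have "hecke_fixed_point w1 w2 N m f f0 f' L0 L' z c1 c2"
    using lattice isogeny by (intro hecke_fixed_point.intro hecke_fixed_point_axioms.intro) auto
  thus ?thesis by (rule that)
qed

theorem lemma4p9:
  fixes N m :: nat and eps :: int and L :: "complex set" and f :: "complex \<Rightarrow> complex"
  assumes "prime N"
    and "\<not> QuadRes (int N) eps"
    and "0 < m" and "coprime m N" and "real m < real N ^ 2 / 4"
    and "\<not> (\<forall>L' f'. ns_structure N eps L' f' \<longrightarrow> hecke_corr N eps m L' f' L' f')"
    and "ns_structure N eps L f"
    and "hecke_corr N eps m L f L f"
  shows "heegner N L f"
proof -
  obtain w1 w2 where "Im (w2 / w1) \<noteq> 0" and L: "L = lattice_gen w1 w2"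
    using assms(7) unfolding ns_structure_def is_lattice_def by blast
  then interpret lattice_basis w1 w2 by unfold_locales
  have f: "is_tors_endo N L f" and square: "\<forall>x\<in>torsion N L. f (f x) - of_int eps * x \<in> L"
    using assms(7) unfolding ns_structure_def by blast+
  obtain f0 f' L0 L' z c1 c2 where "hecke_fixed_point w1 w2 N m f f0 f' L0 L' z c1 c2"
    using hecke_corr_fixed_point[OF lattice_basis_axioms] assms(8) unfolding L by blast
  then interpret hecke_fixed_point w1 w2 N m f f0 f' L0 L' z c1 c2 .
  show ?thesis
  proof (cases "Im c = 0")
    case True
    \<comment> \<open>then the isogeny has degree \<open>m = 1\<close>, excluded by the hypothesis that \<open>C_m\<close> is not the whole diagonal\<close>
    hence "m \<le> 1" using cyclic_mod_real[OF c_End_ring True c_nonzero c_cyclic_mod] m_le_1_if_c_unit by blast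
    hence "m = 1" using assms(3) by simp
    thus ?thesis using hecke_corr_one assms(6) by blast
  next
    case False
    from heegner_if_cyclic_endomorphism[OF assms(1,2,3) _ f[unfolded L] square[unfolded L] c_End_ring False
        c_commutes m_div_c_End_ring c_cyclic_mod] assms(5)
    show ?thesis unfolding L by simp
  qed
qed

end
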